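(* Let $\mathcal{C}$ be a deflation-exact category and $\mathcal{A}$ an admissibly deflation-percolating subcategory. Consider a commutative diagram $$\begin{array}{ccccc} X&\rightarrowtail&Y&\twoheadrightarrow&Z\\ \downarrow{\scriptstyle f}&&\downarrow{\scriptstyle g}&&\|\\ X'&\rightarrowtail&Y'&\twoheadrightarrow&Z\end{array}$$ whose rows are conflations and whose right vertical map is the identity of $Z$. (1) If $f$ is an $\mathcal{A}^{-1}$-inflation, then $g$ is an $\mathcal{A}^{-1}$-inflation. (2) If $f$ is an $\mathcal{A}^{-1}$-deflation, then $g$ is an $\mathcal{A}^{-1}$-deflation.
   Context: A conflation category is an additive category with a class of kernel-cokernel pairs (closed under isomorphisms) called conflations; first map an inflation, second a deflation. A deflation-exact category is a conflation category satisfying: (R0) $1_0$ is a deflation; (R1) composites of deflations are deflations; (R2) pullbacks of deflations along arbitrary morphisms exist and are deflations. A non-empty full subcategory $\mathcal{A}$ is admissibly deflation-percolating if: (A1) for every conflation $A'\rightarrowtail A\twoheadrightarrow A''$, $A\in\mathcal{A}$ iff $A',A''\in\mathcal{A}$; (A2) every morphism $C\to A$ with $A\in\mathcal{A}$ factors as a deflation $C\twoheadrightarrow A'$ followed by an inflation $A'\rightarrowtail A$ with $A'\in\mathcal{A}$; (A3) if $a\colon C\rightarrowtail D$ is an inflation and $b\colon C\twoheadrightarrow A$ a deflation with $A\in\mathcal{A}$, the pushout of $a$ along $b$ exists and yields a deflation $D\twoheadrightarrow P$ and an inflation $A\rightarrowtail P$. An $\mathcal{A}^{-1}$-inflation is an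 inflation with cokernel in $\mathcal{A}$; an $\mathcal{A}^{-1}$-deflation is a deflation with kernel in $\mathcal{A}$. *)

theory Defs
  imports Main
begin

text \<open>An additive category is represented by a record: a set of objects, hom-sets,
composition (cmp g f = g after f), identities, and the abelian group structure on hom-sets.\<close>

record ('o, 'm) addcat =
  Ob   :: "'o set"
  Hom  :: "'o \<Rightarrow> 'o \<Rightarrow> 'm set"
  cmp  :: "'m \<Rightarrow> 'm \<Rightarrow> 'm"
  idm  :: "'o \<Rightarrow> 'm"
  plus :: "'m \<Rightarrow> 'm \<Rightarrow> 'm"
  zer  :: "'o \<Rightarrow> 'o \<Rightarrow> 'm"
  neg  :: "'m \<Rightarrow> 'm"

definition is_category :: "('o, 'm, 'e) addcat_scheme \<Rightarrow> bool" where
  "is_category C \<longleftrightarrow>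
     (\<forall>X Y. Hom C X Y \<noteq> {} \<longrightarrow> X \<in> Ob C \<and> Y \<in> Ob C) \<and>
     (\<forall>X \<in> Ob C. idm C X \<in> Hom C X X) \<and>
     (\<forall>X Y Z f g. f \<in> Hom C X Y \<longrightarrow> g \<in> Hom C Y Z \<longrightarrow> cmp C g f \<in> Hom C X Z) \<and>
     (\<forall>X Y f. f \<in> Hom C X Y \<longrightarrow> cmp C (idm C Y) f = f \<and> cmp C f (idm C X) = f) \<and>
     (\<forall>W X Y Z f g h. f \<in> Hom C W X \<longrightarrow> g \<in> Hom C X Y \<longrightarrow> h \<in> Hom C Y Z \<longrightarrow>
        cmp C h (cmp C g f) = cmp C (cmp C h g) f)"

definition is_preadditive :: "('o, 'm, 'e) addcat_scheme \<Rightarrow> bool" where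
  "is_preadditive C \<longleftrightarrow> is_category C \<and>
     (\<forall>X \<in> Ob C. \<forall>Y \<in> Ob C.
        zer C X Y \<in> Hom C X Y \<and>
        (\<forall>f \<in> Hom C X Y. neg C f \<in> Hom C X Y \<and> plus C f (zer C X Y) = f \<and>
                         plus C f (neg C f) = zer C X Y) \<and>
        (\<forall>f \<in> Hom C X Y. \<forall>g \<in> Hom C X Y. plus C f g \<in> Hom C X Y \<and> plus C f g = plus C g f \<and>
           (\<forall>h \<in> Hom C X Y. plus C (plus C f g) h = plus C f (plus C g h)))) \<and>
     (\<forall>X Y Z. \<forall>f \<in> Hom C X Y. \<forall>g \<in> Hom C X Y. \<forall>h \<in> Hom C Y Z.
        cmp C h (plus C f g) = plus C (cmp C h f) (cmp C h g)) \<and>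
     (\<forall>X Y Z. \<forall>f \<in> Hom C X Y. \<forall>g \<in> Hom C Y Z. \<forall>h \<in> Hom C Y Z.
        cmp C (plus C g h) f = plus C (cmp C g f) (cmp C h f))"

definition zero_object :: "('o, 'm, 'e) addcat_scheme \<Rightarrow> 'o \<Rightarrow> bool" where
  "zero_object C Z \<longleftrightarrow> Z \<in> Ob C \<and>
     (\<forall>X \<in> Ob C. Hom C Z X = {zer C Z X} \<and> Hom C X Z = {zer C X Z})"

definition is_additive :: "('o, 'm, 'e) addcat_scheme \<Rightarrow> bool" where
  "is_additive C \<longleftrightarrow> is_preadditive C \<and> (\<exists>Z. zero_object C Z) \<and>
     (\<forall>X \<in> Ob C. \<forall>Y \<in> Ob C. \<exists>P i1 i2 p1 p2. P \<in> Ob C \<and>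
        i1 \<in> Hom C X P \<and> i2 \<in> Hom C Y P \<and> p1 \<in> Hom C P X \<and> p2 \<in> Hom C P Y \<and>
        cmp C p1 i1 = idm C X \<and> cmp C p2 i2 = idm C Y \<and>
        cmp C p1 i2 = zer C Y X \<and> cmp C p2 i1 = zer C X Y \<and>
        plus C (cmp C i1 p1) (cmp C i2 p2) = idm C P)"

definition is_kernel :: "('o, 'm, 'e) addcat_scheme \<Rightarrow> 'o \<Rightarrow> 'm \<Rightarrow> 'o \<Rightarrow> 'm \<Rightarrow> 'o \<Rightarrow> bool" where
  "is_kernel C K k A d B \<longleftrightarrow> k \<in> Hom C K A \<and> d \<in> Hom C A B \<and> cmp C d k = zer C K B \<and>
     (\<forall>T. \<forall>t \<in> Hom C T A. cmp C d t = zer C T B \<longrightarrow> (\<exists>!u. u \<in> Hom C T K \<and> cmp C k u = t))"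

definition is_cokernel :: "('o, 'm, 'e) addcat_scheme \<Rightarrow> 'o \<Rightarrow> 'm \<Rightarrow> 'o \<Rightarrow> 'm \<Rightarrow> 'o \<Rightarrow> bool" where
  "is_cokernel C A k B d Q \<longleftrightarrow> k \<in> Hom C A B \<and> d \<in> Hom C B Q \<and> cmp C d k = zer C A Q \<and>
     (\<forall>T. \<forall>t \<in> Hom C B T. cmp C t k = zer C A T \<longrightarrow> (\<exists>!u. u \<in> Hom C Q T \<and> cmp C u d = t))"

definition is_iso :: "('o, 'm, 'e) addcat_scheme \<Rightarrow> 'o \<Rightarrow> 'o \<Rightarrow> 'm \<Rightarrow> bool" where
  "is_iso C X Y f \<longleftrightarrow> f \<in> Hom C X Y \<and>
     (\<exists>g \<in> Hom C Y X. cmp C g f = idm C X \<and> cmp C f g = idm C Y)"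

text \<open>A class of conflations is a predicate conf A' i A p A'' (i : A' \<rightarrowtail> A, p : A \<twoheadrightarrow> A'').\<close>
type_synonym ('o, 'm) confl = "'o \<Rightarrow> 'm \<Rightarrow> 'o \<Rightarrow> 'm \<Rightarrow> 'o \<Rightarrow> bool"

definition conflation_category :: "('o, 'm, 'e) addcat_scheme \<Rightarrow> ('o, 'm) confl \<Rightarrow> bool" where
  "conflation_category C conf \<longleftrightarrow> is_additive C \<and>
     (\<forall>A' i A p A''. conf A' i A p A'' \<longrightarrow>
        is_kernel C A' i A p A'' \<and> is_cokernel C A' i A p A'') \<and>
     (\<forall>A' i A p A'' B' j B q B'' a b c.
        conf A' i A p A'' \<and> j \<in> Hom C B' B \<and> q \<in> Hom C B B'' \<and>
        is_iso C A' B' a \<and> is_iso C A B b \<and> is_iso C A'' B'' c \<and>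
        cmp C j a = cmp C b i \<and> cmp C q b = cmp C c p \<longrightarrow> conf B' j B q B'')"

definition inflation :: "('o, 'm) confl \<Rightarrow> 'o \<Rightarrow> 'm \<Rightarrow> 'o \<Rightarrow> bool" where
  "inflation conf A' i A \<longleftrightarrow> (\<exists>p A''. conf A' i A p A'')"

definition deflation :: "('o, 'm) confl \<Rightarrow> 'o \<Rightarrow> 'm \<Rightarrow> 'o \<Rightarrow> bool" where
  "deflation conf A p A'' \<longleftrightarrow> (\<exists>A' i. conf A' i A p A'')"

definition is_pullback :: "('o, 'm, 'e) addcat_scheme \<Rightarrow> 'o \<Rightarrow> 'm \<Rightarrow> 'm \<Rightarrow> 'o \<Rightarrow> 'm \<Rightarrow> 'o \<Rightarrow> 'm \<Rightarrow> 'o \<Rightarrow> bool" where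
  "is_pullback C P t' p' B p E t D \<longleftrightarrow>
     P \<in> Ob C \<and> t' \<in> Hom C P B \<and> p' \<in> Hom C P E \<and> p \<in> Hom C B D \<and> t \<in> Hom C E D \<and>
     cmp C p t' = cmp C t p' \<and>
     (\<forall>T. \<forall>u \<in> Hom C T B. \<forall>v \<in> Hom C T E. cmp C p u = cmp C t v \<longrightarrow>
        (\<exists>!w. w \<in> Hom C T P \<and> cmp C t' w = u \<and> cmp C p' w = v))"

definition is_pushout :: "('o, 'm, 'e) addcat_scheme \<Rightarrow> 'o \<Rightarrow> 'm \<Rightarrow> 'o \<Rightarrow> 'm \<Rightarrow> 'o \<Rightarrow> 'm \<Rightarrow> 'm \<Rightarrow> 'o \<Rightarrow> bool" where
  "is_pushout C X a D b A b' a' P \<longleftrightarrow>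
     P \<in> Ob C \<and> a \<in> Hom C X D \<and> b \<in> Hom C X A \<and> b' \<in> Hom C D P \<and> a' \<in> Hom C A P \<and>
     cmp C b' a = cmp C a' b \<and>
     (\<forall>T. \<forall>u \<in> Hom C D T. \<forall>v \<in> Hom C A T. cmp C u a = cmp C v b \<longrightarrow>
        (\<exists>!w. w \<in> Hom C P T \<and> cmp C w b' = u \<and> cmp C w a' = v))"

definition deflation_exact :: "('o, 'm, 'e) addcat_scheme \<Rightarrow> ('o, 'm) confl \<Rightarrow> bool" where
  "deflation_exact C conf \<longleftrightarrow> conflation_category C conf \<and>
     (\<forall>Z. zero_object C Z \<longrightarrow> deflation conf Z (idm C Z) Z) \<and>
     (\<forall>A B D p q. deflation conf A p B \<and> deflation conf B q D \<longrightarrow> deflation conf A (cmp C q p) D) \<and>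
     (\<forall>B p D E t. deflation conf B p D \<and> t \<in> Hom C E D \<longrightarrow>
        (\<exists>P t' p'. is_pullback C P t' p' B p E t D \<and> deflation conf P p' E))"

definition admissibly_deflation_percolating ::
  "('o, 'm, 'e) addcat_scheme \<Rightarrow> ('o, 'm) confl \<Rightarrow> 'o set \<Rightarrow> bool" where
  "admissibly_deflation_percolating C conf \<A> \<longleftrightarrow> \<A> \<noteq> {} \<and> \<A> \<subseteq> Ob C \<and>
     (\<forall>A' i A p A''. conf A' i A p A'' \<longrightarrow> (A \<in> \<A> \<longleftrightarrow> A' \<in> \<A> \<and> A'' \<in> \<A>)) \<and>
     (\<forall>X A c. A \<in> \<A> \<and> c \<in> Hom C X A \<longrightarrow>
        (\<exists>A' d i. A' \<in> \<A> \<and> deflation conf X d A' \<and> inflation conf A' i A \<and> c = cmp C i d)) \<and>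
     (\<forall>X D A a b. inflation conf X a D \<and> deflation conf X b A \<and> A \<in> \<A> \<longrightarrow>
        (\<exists>P b' a'. is_pushout C X a D b A b' a' P \<and> deflation conf D b' P \<and> inflation conf A a' P))"

definition A_inflation :: "('o, 'm) confl \<Rightarrow> 'o set \<Rightarrow> 'o \<Rightarrow> 'm \<Rightarrow> 'o \<Rightarrow> bool" where
  "A_inflation conf \<A> X f Y \<longleftrightarrow> (\<exists>p Q. conf X f Y p Q \<and> Q \<in> \<A>)"

definition A_deflation :: "('o, 'm) confl \<Rightarrow> 'o set \<Rightarrow> 'o \<Rightarrow> 'm \<Rightarrow> 'o \<Rightarrow> bool" where
  "A_deflation conf \<A> X f Y \<longleftrightarrow> (\<exists>K k. conf K k X f Y \<and> K \<in> \<A>)"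

end

theory Submission
  imports Defs
begin

text \<open>
Both statements are proved on the pullback \<open>P = Y \<times>\<^sub>Z Y'\<close> of the two deflations. Since
\<open>p' g = p\<close>, it splits as \<open>P = Y \<oplus> X'\<close> with coordinates \<open>(\<pi>1, \<beta>)\<close>, in which the deflation
\<open>\<pi>2 : P \<twoheadrightarrow> Y'\<close> is \<open>(g, i')\<close>.

(1) If \<open>f\<close> has cokernel \<open>c : X' \<twoheadrightarrow> A\<close> with \<open>A \<in> \<A>\<close>, then \<open>c \<beta>\<close> vanishes on the kernel of \<open>\<pi>2\<close>
and descends to \<open>q : Y' \<rightarrow> A\<close> with \<open>q g = 0\<close> and \<open>q i' = c\<close>. As \<open>c\<close> is epic, the inflation in the
(A2)-factorisation of \<open>q\<close> is an isomorphism, so \<open>q\<close> is a deflation. And \<open>g\<close> is a kernel of \<open>q\<close>: it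
is monic, and every map killed by \<open>q\<close> factors through \<open>g\<close> after precomposition with a deflation
(a pullback of \<open>\<pi>2\<close>).

(2) If \<open>f\<close> has kernel \<open>k : K \<rightarrowtail> X\<close> with \<open>K \<in> \<A>\<close>, pulling \<open>f\<close> back along \<open>\<beta>\<close> gives
\<open>D = Y \<oplus> X\<close> and the deflation \<open>h = (g, g i) : D \<twoheadrightarrow> Y'\<close>, which factors as \<open>g d\<close> through the
retraction \<open>d = (1, i) : D \<rightarrow> Y\<close>. The kernel of \<open>h\<close> is \<open>X \<oplus> K\<close>, and its projection \<open>b\<close> onto \<open>K\<close>
is a deflation. By (A3) the kernel of \<open>h\<close> can be pushed out along \<open>b\<close>; this pushout is \<open>Y\<close> itself,
which makes \<open>i k\<close> an inflation with cokernel \<open>g\<close>.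
\<close>

definition monic :: "('o, 'm, 'e) addcat_scheme \<Rightarrow> 'o \<Rightarrow> 'o \<Rightarrow> 'm \<Rightarrow> bool" where
  "monic C X Y f \<longleftrightarrow> f \<in> Hom C X Y \<and>
     (\<forall>T u v. u \<in> Hom C T X \<longrightarrow> v \<in> Hom C T X \<longrightarrow> cmp C f u = cmp C f v \<longrightarrow> u = v)"

definition epic :: "('o, 'm, 'e) addcat_scheme \<Rightarrow> 'o \<Rightarrow> 'o \<Rightarrow> 'm \<Rightarrow> bool" where
  "epic C X Y f \<longleftrightarrow> f \<in> Hom C X Y \<and>
     (\<forall>T u v. u \<in> Hom C Y T \<longrightarrow> v \<in> Hom C Y T \<longrightarrow> cmp C u f = cmp C v f \<longrightarrow> u = v)"

definition is_product :: "('o, 'm, 'e) addcat_scheme \<Rightarrow> 'o \<Rightarrow> 'm \<Rightarrow> 'o \<Rightarrow> 'm \<Rightarrow> 'o \<Rightarrow> bool" where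
  "is_product C P x X y Y \<longleftrightarrow> x \<in> Hom C P X \<and> y \<in> Hom C P Y \<and>
     (\<forall>T. \<forall>u \<in> Hom C T X. \<forall>v \<in> Hom C T Y.
        \<exists>!w. w \<in> Hom C T P \<and> cmp C x w = u \<and> cmp C y w = v)"

lemma ex1_unique: "\<exists>!x. P x \<Longrightarrow> P a \<Longrightarrow> P b \<Longrightarrow> a = b"
  by blast

locale preadditive_category =
  fixes C :: "('o, 'm, 'e) addcat_scheme"
  assumes preadditive: "is_preadditive C"
begin

abbreviation arr_comp (infixr "\<cdot>" 70) where "g \<cdot> f \<equiv> cmp C g f"
abbreviation arr_plus (infixl "\<oplus>" 65) where "f \<oplus> g \<equiv> plus C f g"
abbreviation arr_minus (infixl "\<ominus>" 65) where "f \<ominus> g \<equiv> plus C f (neg C g)"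

lemma category: "is_category C"
  using preadditive by (simp add: is_preadditive_def)

lemma hom_dom: "f \<in> Hom C X Y \<Longrightarrow> X \<in> Ob C"
  and hom_cod: "f \<in> Hom C X Y \<Longrightarrow> Y \<in> Ob C"
  using category unfolding is_category_def by blast+

lemma id_hom: "X \<in> Ob C \<Longrightarrow> idm C X \<in> Hom C X X"
  and comp_hom: "f \<in> Hom C X Y \<Longrightarrow> g \<in> Hom C Y Z \<Longrightarrow> g \<cdot> f \<in> Hom C X Z"
  and comp_id_left: "f \<in> Hom C X Y \<Longrightarrow> idm C Y \<cdot> f = f"
  and comp_id_right: "f \<in> Hom C X Y \<Longrightarrow> f \<cdot> idm C X = f"
  and comp_assoc: "f \<in> Hom C W X \<Longrightarrow> g \<in> Hom C X Y \<Longrightarrow> h \<in> Hom C Y Z \<Longrightarrow>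
    h \<cdot> (g \<cdot> f) = (h \<cdot> g) \<cdot> f"
  using category unfolding is_category_def by blast+

lemma hom_group:
  assumes "X \<in> Ob C" "Y \<in> Ob C"
  shows "zer C X Y \<in> Hom C X Y \<and>
    (\<forall>f \<in> Hom C X Y. neg C f \<in> Hom C X Y \<and> f \<oplus> zer C X Y = f \<and> f \<ominus> f = zer C X Y) \<and>
    (\<forall>f \<in> Hom C X Y. \<forall>g \<in> Hom C X Y. f \<oplus> g \<in> Hom C X Y \<and> f \<oplus> g = g \<oplus> f \<and>
       (\<forall>h \<in> Hom C X Y. f \<oplus> g \<oplus> h = f \<oplus> (g \<oplus> h)))"
  using preadditive assms unfolding is_preadditive_def by blast

lemma zero_hom: "X \<in> Ob C \<Longrightarrow> Y \<in> Ob C \<Longrightarrow> zer C X Y \<in> Hom C X Y"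
  using hom_group by blast

lemma neg_hom: "f \<in> Hom C X Y \<Longrightarrow> neg C f \<in> Hom C X Y"
  and plus_zero: "f \<in> Hom C X Y \<Longrightarrow> f \<oplus> zer C X Y = f"
  and minus_self: "f \<in> Hom C X Y \<Longrightarrow> f \<ominus> f = zer C X Y"
  and plus_hom: "f \<in> Hom C X Y \<Longrightarrow> g \<in> Hom C X Y \<Longrightarrow> f \<oplus> g \<in> Hom C X Y"
  and plus_comm: "f \<in> Hom C X Y \<Longrightarrow> g \<in> Hom C X Y \<Longrightarrow> f \<oplus> g = g \<oplus> f"
  and plus_assoc: "f \<in> Hom C X Y \<Longrightarrow> g \<in> Hom C X Y \<Longrightarrow> h \<in> Hom C X Y \<Longrightarrow>
    f \<oplus> g \<oplus> h = f \<oplus> (g \<oplus> h)"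
  using hom_group[OF hom_dom hom_cod] by blast+

lemma comp_plus: "f \<in> Hom C X Y \<Longrightarrow> g \<in> Hom C X Y \<Longrightarrow> h \<in> Hom C Y Z \<Longrightarrow>
    h \<cdot> (f \<oplus> g) = h \<cdot> f \<oplus> h \<cdot> g"
  and plus_comp: "f \<in> Hom C X Y \<Longrightarrow> g \<in> Hom C Y Z \<Longrightarrow> h \<in> Hom C Y Z \<Longrightarrow>
    (g \<oplus> h) \<cdot> f = g \<cdot> f \<oplus> h \<cdot> f"
  using preadditive unfolding is_preadditive_def by blast+

lemma minus_hom: "f \<in> Hom C X Y \<Longrightarrow> g \<in> Hom C X Y \<Longrightarrow> f \<ominus> g \<in> Hom C X Y"
  by (simp add: neg_hom plus_hom)

lemma zero_plus: "f \<in> Hom C X Y \<Longrightarrow> zer C X Y \<oplus> f = f"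
  using plus_comm[OF zero_hom[OF hom_dom hom_cod]] plus_zero by metis

lemma plus_right_cancel:
  assumes "a \<in> Hom C X Y" "b \<in> Hom C X Y" "c \<in> Hom C X Y" "a \<oplus> c = b \<oplus> c"
  shows "a = b"
proof -
  have n: "neg C c \<in> Hom C X Y" using neg_hom[OF assms(3)] .
  have "a = a \<oplus> c \<ominus> c"
    using plus_assoc[OF assms(1,3) n] minus_self[OF assms(3)] plus_zero[OF assms(1)] by simp
  also have "\<dots> = b"
    using assms(4) plus_assoc[OF assms(2,3) n] minus_self[OF assms(3)] plus_zero[OF assms(2)] by simp
  finally show ?thesis .
qed

lemma plus_left_cancel:
  assumes "a \<in> Hom C X Y" "b \<in> Hom C X Y" "c \<in> Hom C X Y" "c \<oplus> a = c \<oplus> b"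
  shows "a = b"
  using plus_right_cancel[OF assms(1-3)] assms(4) plus_comm[OF assms(3)] assms(1,2) by simp

lemma eq_if_minus_eq_zero:
  assumes "a \<in> Hom C X Y" "b \<in> Hom C X Y" "a \<ominus> b = zer C X Y"
  shows "a = b"
  using plus_right_cancel[OF assms(1,2) neg_hom[OF assms(2)]] assms(3) minus_self[OF assms(2)]
  by simp

lemma minus_eq_iff_eq_plus:
  assumes "a \<in> Hom C X Y" "b \<in> Hom C X Y" "c \<in> Hom C X Y"
  shows "a \<ominus> b = c \<longleftrightarrow> a = c \<oplus> b"
proof
  have n: "neg C b \<in> Hom C X Y" using neg_hom[OF assms(2)] .
  assume "a \<ominus> b = c"
  then have "c \<oplus> b = a \<oplus> (neg C b \<oplus> b)" using plus_assoc[OF assms(1) n assms(2)] by simp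
  also have "neg C b \<oplus> b = zer C X Y"
    using plus_comm[OF n assms(2)] minus_self[OF assms(2)] by simp
  finally show "a = c \<oplus> b" using plus_zero[OF assms(1)] by simp
next
  assume "a = c \<oplus> b"
  then show "a \<ominus> b = c"
    using plus_assoc[OF assms(3,2) neg_hom[OF assms(2)]] minus_self[OF assms(2)] plus_zero[OF assms(3)]
    by simp
qed

lemma idempotent_zero:
  assumes "a \<in> Hom C X Y" "a \<oplus> a = a"
  shows "a = zer C X Y"
proof -
  have z: "zer C X Y \<in> Hom C X Y" using zero_hom[OF hom_dom hom_cod] assms(1) by blast
  show ?thesis using plus_right_cancel[OF assms(1) z assms(1)] assms(2) zero_plus[OF assms(1)] by simp
qed

lemma comp_zero:
  assumes "h \<in> Hom C Y Z" "X \<in> Ob C"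
  shows "h \<cdot> zer C X Y = zer C X Z"
proof -
  have z: "zer C X Y \<in> Hom C X Y" using zero_hom assms hom_dom by blast
  have "h \<cdot> zer C X Y \<oplus> h \<cdot> zer C X Y = h \<cdot> zer C X Y"
    using comp_plus[OF z z assms(1)] plus_zero[OF z] by simp
  then show ?thesis using idempotent_zero comp_hom[OF z assms(1)] by blast
qed

lemma zero_comp:
  assumes "h \<in> Hom C X Y" "Z \<in> Ob C"
  shows "zer C Y Z \<cdot> h = zer C X Z"
proof -
  have z: "zer C Y Z \<in> Hom C Y Z" using zero_hom assms hom_cod by blast
  have "zer C Y Z \<cdot> h \<oplus> zer C Y Z \<cdot> h = zer C Y Z \<cdot> h"
    using plus_comp[OF assms(1) z z] plus_zero[OF z] by simp
  then show ?thesis using idempotent_zero comp_hom[OF assms(1) z] by blast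
qed

lemma comp_neg:
  assumes "f \<in> Hom C X Y" "h \<in> Hom C Y Z"
  shows "h \<cdot> neg C f = neg C (h \<cdot> f)"
proof -
  have "h \<cdot> f \<oplus> h \<cdot> neg C f = zer C X Z"
    using comp_plus[OF assms(1) neg_hom[OF assms(1)] assms(2)] minus_self[OF assms(1)]
      comp_zero[OF assms(2) hom_dom[OF assms(1)]] by simp
  then have "h \<cdot> neg C f \<oplus> h \<cdot> f = zer C X Z"
    using plus_comm[OF comp_hom[OF assms] comp_hom[OF neg_hom[OF assms(1)] assms(2)]] by simp
  then have "h \<cdot> neg C f \<oplus> h \<cdot> f = h \<cdot> f \<ominus> h \<cdot> f" using minus_self[OF comp_hom[OF assms]] by simp
  then show ?thesis
    using plus_right_cancel[OF comp_hom[OF neg_hom[OF assms(1)] assms(2)] neg_hom[OF comp_hom[OF assms]]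
        comp_hom[OF assms]] plus_comm[OF comp_hom[OF assms] neg_hom[OF comp_hom[OF assms]]] by simp
qed

lemma comp_minus:
  assumes "f \<in> Hom C X Y" "g \<in> Hom C X Y" "h \<in> Hom C Y Z"
  shows "h \<cdot> (f \<ominus> g) = h \<cdot> f \<ominus> h \<cdot> g"
  using comp_plus[OF assms(1) neg_hom[OF assms(2)] assms(3)] comp_neg[OF assms(2,3)] by simp

lemma monicD: "monic C X Y f \<Longrightarrow> u \<in> Hom C T X \<Longrightarrow> v \<in> Hom C T X \<Longrightarrow> f \<cdot> u = f \<cdot> v \<Longrightarrow> u = v"
  unfolding monic_def by blast

lemma epicD: "epic C X Y f \<Longrightarrow> u \<in> Hom C Y T \<Longrightarrow> v \<in> Hom C Y T \<Longrightarrow> u \<cdot> f = v \<cdot> f \<Longrightarrow> u = v"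
  unfolding epic_def by blast

lemma monicI:
  assumes "f \<in> Hom C X Y" and "\<And>T u. u \<in> Hom C T X \<Longrightarrow> f \<cdot> u = zer C T Y \<Longrightarrow> u = zer C T X"
  shows "monic C X Y f"
  unfolding monic_def
proof (intro conjI assms(1) allI impI)
  fix T u v assume u: "u \<in> Hom C T X" and v: "v \<in> Hom C T X" and eq: "f \<cdot> u = f \<cdot> v"
  have "f \<cdot> (u \<ominus> v) = f \<cdot> v \<ominus> f \<cdot> v"
    using comp_plus[OF u neg_hom[OF v] assms(1)] comp_neg[OF v assms(1)] eq by simp
  then have "f \<cdot> (u \<ominus> v) = zer C T Y" using minus_self[OF comp_hom[OF v assms(1)]] by simp
  then show "u = v" using assms(2)[OF minus_hom[OF u v]] eq_if_minus_eq_zero[OF u v] by blast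
qed

lemma monic_comp:
  assumes "monic C X Y f" "monic C Y Z g"
  shows "monic C X Z (g \<cdot> f)"
proof -
  have f: "f \<in> Hom C X Y" and g: "g \<in> Hom C Y Z" using assms unfolding monic_def by blast+
  show ?thesis
    unfolding monic_def
  proof (intro conjI comp_hom[OF f g] allI impI)
    fix T u v assume u: "u \<in> Hom C T X" and v: "v \<in> Hom C T X" and eq: "(g \<cdot> f) \<cdot> u = (g \<cdot> f) \<cdot> v"
    then have "g \<cdot> (f \<cdot> u) = g \<cdot> (f \<cdot> v)" using comp_assoc[OF u f g] comp_assoc[OF v f g] by simp
    then have "f \<cdot> u = f \<cdot> v" using monicD[OF assms(2) comp_hom[OF u f] comp_hom[OF v f]] by blast
    then show "u = v" using monicD[OF assms(1) u v] by blast
  qed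
qed

lemma epic_if_comp_epic:
  assumes "epic C X Z (g \<cdot> d)" "d \<in> Hom C X Y" "g \<in> Hom C Y Z"
  shows "epic C Y Z g"
  unfolding epic_def
proof (intro conjI assms(3) allI impI)
  fix T u v assume u: "u \<in> Hom C Z T" and v: "v \<in> Hom C Z T" and eq: "u \<cdot> g = v \<cdot> g"
  show "u = v"
    using epicD[OF assms(1) u v] eq comp_assoc[OF assms(2,3) u] comp_assoc[OF assms(2,3) v] by simp
qed

lemma kernel_hom: "is_kernel C K k A d B \<Longrightarrow> k \<in> Hom C K A \<and> d \<in> Hom C A B \<and> d \<cdot> k = zer C K B"
  unfolding is_kernel_def by blast

lemma kernel_lift:
  "is_kernel C K k A d B \<Longrightarrow> t \<in> Hom C T A \<Longrightarrow> d \<cdot> t = zer C T B \<Longrightarrow> \<exists>u \<in> Hom C T K. k \<cdot> u = t"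
  unfolding is_kernel_def by blast

lemma kernel_unique: "is_kernel C K k A d B \<Longrightarrow> t \<in> Hom C T A \<Longrightarrow> d \<cdot> t = zer C T B \<Longrightarrow>
    \<exists>!u. u \<in> Hom C T K \<and> k \<cdot> u = t"
  unfolding is_kernel_def by blast

lemma kernel_monic:
  assumes "is_kernel C K k A d B"
  shows "monic C K A k"
  unfolding monic_def
proof (intro conjI allI impI)
  have k: "k \<in> Hom C K A" and d: "d \<in> Hom C A B" and dk: "d \<cdot> k = zer C K B"
    using kernel_hom[OF assms] by auto
  show "k \<in> Hom C K A" using k .
  fix T u v assume u: "u \<in> Hom C T K" and v: "v \<in> Hom C T K" and eq: "k \<cdot> u = k \<cdot> v"
  have "d \<cdot> (k \<cdot> u) = zer C T B"
    using comp_assoc[OF u k d] dk zero_comp[OF u hom_cod[OF d]] by simp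
  from kernel_unique[OF assms comp_hom[OF u k] this] show "u = v"
    by (rule ex1_unique) (use u v eq in auto)
qed

lemma cokernel_hom: "is_cokernel C A k B d Q \<Longrightarrow> k \<in> Hom C A B \<and> d \<in> Hom C B Q \<and> d \<cdot> k = zer C A Q"
  unfolding is_cokernel_def by blast

lemma cokernel_desc:
  "is_cokernel C A k B d Q \<Longrightarrow> t \<in> Hom C B T \<Longrightarrow> t \<cdot> k = zer C A T \<Longrightarrow> \<exists>u \<in> Hom C Q T. u \<cdot> d = t"
  unfolding is_cokernel_def by blast

lemma cokernel_unique: "is_cokernel C A k B d Q \<Longrightarrow> t \<in> Hom C B T \<Longrightarrow> t \<cdot> k = zer C A T \<Longrightarrow>
    \<exists>!u. u \<in> Hom C Q T \<and> u \<cdot> d = t"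
  unfolding is_cokernel_def by blast

lemma cokernel_epic:
  assumes "is_cokernel C A k B d Q"
  shows "epic C B Q d"
  unfolding epic_def
proof (intro conjI allI impI)
  have k: "k \<in> Hom C A B" and d: "d \<in> Hom C B Q" and dk: "d \<cdot> k = zer C A Q"
    using cokernel_hom[OF assms] by auto
  show "d \<in> Hom C B Q" using d .
  fix T u v assume u: "u \<in> Hom C Q T" and v: "v \<in> Hom C Q T" and eq: "u \<cdot> d = v \<cdot> d"
  have "(u \<cdot> d) \<cdot> k = zer C A T"
    using comp_assoc[OF k d u] dk comp_zero[OF u hom_dom[OF k]] by simp
  from cokernel_unique[OF assms comp_hom[OF d u] this] show "u = v"
    by (rule ex1_unique) (use u v eq in auto)
qed

lemma pullback_hom: "is_pullback C P t' p' B p E t D \<Longrightarrow>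
    P \<in> Ob C \<and> t' \<in> Hom C P B \<and> p' \<in> Hom C P E \<and> p \<in> Hom C B D \<and> t \<in> Hom C E D \<and> p \<cdot> t' = t \<cdot> p'"
  unfolding is_pullback_def by blast

lemma pullback_lift: "is_pullback C P t' p' B p E t D \<Longrightarrow> u \<in> Hom C T B \<Longrightarrow> v \<in> Hom C T E \<Longrightarrow>
    p \<cdot> u = t \<cdot> v \<Longrightarrow> \<exists>w \<in> Hom C T P. t' \<cdot> w = u \<and> p' \<cdot> w = v"
  unfolding is_pullback_def by blast

lemma pullback_unique: "is_pullback C P t' p' B p E t D \<Longrightarrow> u \<in> Hom C T B \<Longrightarrow> v \<in> Hom C T E \<Longrightarrow>
    p \<cdot> u = t \<cdot> v \<Longrightarrow> \<exists>!w. w \<in> Hom C T P \<and> t' \<cdot> w = u \<and> p' \<cdot> w = v"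
  unfolding is_pullback_def by blast

lemma pullback_eq:
  assumes pb: "is_pullback C P t' p' B p E t D" and "w1 \<in> Hom C T P" "w2 \<in> Hom C T P"
    and "t' \<cdot> w1 = t' \<cdot> w2" "p' \<cdot> w1 = p' \<cdot> w2"
  shows "w1 = w2"
proof -
  have t': "t' \<in> Hom C P B" and p': "p' \<in> Hom C P E" and p: "p \<in> Hom C B D" and t: "t \<in> Hom C E D"
    and sq: "p \<cdot> t' = t \<cdot> p'"
    using pullback_hom[OF pb] by auto
  have "p \<cdot> (t' \<cdot> w1) = t \<cdot> (p' \<cdot> w1)"
    using comp_assoc[OF assms(2) t' p] comp_assoc[OF assms(2) p' t] sq by simp
  from pullback_unique[OF pb comp_hom[OF assms(2) t'] comp_hom[OF assms(2) p'] this] show ?thesis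
    by (rule ex1_unique) (use assms(2-5) in auto)
qed

lemma pushout_hom: "is_pushout C X a D b A b' a' P \<Longrightarrow>
    P \<in> Ob C \<and> a \<in> Hom C X D \<and> b \<in> Hom C X A \<and> b' \<in> Hom C D P \<and> a' \<in> Hom C A P \<and> b' \<cdot> a = a' \<cdot> b"
  unfolding is_pushout_def by blast

lemma pushout_desc: "is_pushout C X a D b A b' a' P \<Longrightarrow> u \<in> Hom C D T \<Longrightarrow> v \<in> Hom C A T \<Longrightarrow>
    u \<cdot> a = v \<cdot> b \<Longrightarrow> \<exists>w \<in> Hom C P T. w \<cdot> b' = u \<and> w \<cdot> a' = v"
  unfolding is_pushout_def by blast

lemma pushout_unique: "is_pushout C X a D b A b' a' P \<Longrightarrow> u \<in> Hom C D T \<Longrightarrow> v \<in> Hom C A T \<Longrightarrow>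
    u \<cdot> a = v \<cdot> b \<Longrightarrow> \<exists>!w. w \<in> Hom C P T \<and> w \<cdot> b' = u \<and> w \<cdot> a' = v"
  unfolding is_pushout_def by blast

lemma pushout_eq:
  assumes po: "is_pushout C X a D b A b' a' P" and "w1 \<in> Hom C P T" "w2 \<in> Hom C P T"
    and "w1 \<cdot> b' = w2 \<cdot> b'" "w1 \<cdot> a' = w2 \<cdot> a'"
  shows "w1 = w2"
proof -
  have a: "a \<in> Hom C X D" and b: "b \<in> Hom C X A" and b': "b' \<in> Hom C D P" and a': "a' \<in> Hom C A P"
    and sq: "b' \<cdot> a = a' \<cdot> b"
    using pushout_hom[OF po] by auto
  have "(w1 \<cdot> b') \<cdot> a = (w1 \<cdot> a') \<cdot> b"
    using comp_assoc[OF a b' assms(2)] comp_assoc[OF b a' assms(2)] sq by simp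
  from pushout_unique[OF po comp_hom[OF b' assms(2)] comp_hom[OF a' assms(2)] this] show ?thesis
    by (rule ex1_unique) (use assms(2-5) in auto)
qed

lemma is_isoI: "f \<in> Hom C X Y \<Longrightarrow> g \<in> Hom C Y X \<Longrightarrow> g \<cdot> f = idm C X \<Longrightarrow> f \<cdot> g = idm C Y \<Longrightarrow> is_iso C X Y f"
  unfolding is_iso_def by blast

lemma id_is_iso: "X \<in> Ob C \<Longrightarrow> is_iso C X X (idm C X)"
  using is_isoI[OF id_hom id_hom] comp_id_left[OF id_hom] by blast

lemma is_productI:
  assumes "x \<in> Hom C P X" "y \<in> Hom C P Y"
    and "\<And>T u v. u \<in> Hom C T X \<Longrightarrow> v \<in> Hom C T Y \<Longrightarrow> \<exists>w \<in> Hom C T P. x \<cdot> w = u \<and> y \<cdot> w = v"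
    and "\<And>T w1 w2. w1 \<in> Hom C T P \<Longrightarrow> w2 \<in> Hom C T P \<Longrightarrow> x \<cdot> w1 = x \<cdot> w2 \<Longrightarrow> y \<cdot> w1 = y \<cdot> w2 \<Longrightarrow>
      w1 = w2"
  shows "is_product C P x X y Y"
  unfolding is_product_def
proof (intro conjI assms(1,2) allI ballI)
  fix T u v assume "u \<in> Hom C T X" "v \<in> Hom C T Y"
  then obtain w where w: "w \<in> Hom C T P" "x \<cdot> w = u" "y \<cdot> w = v" using assms(3) by blast
  show "\<exists>!w. w \<in> Hom C T P \<and> x \<cdot> w = u \<and> y \<cdot> w = v"
  proof (rule ex1I[of _ w])
    show "w \<in> Hom C T P \<and> x \<cdot> w = u \<and> y \<cdot> w = v" using w by blast
    fix w' assume "w' \<in> Hom C T P \<and> x \<cdot> w' = u \<and> y \<cdot> w' = v"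
    then show "w' = w" using assms(4)[of w' T w] w by auto
  qed
qed

lemma product_lift: "is_product C P x X y Y \<Longrightarrow> u \<in> Hom C T X \<Longrightarrow> v \<in> Hom C T Y \<Longrightarrow>
    \<exists>w \<in> Hom C T P. x \<cdot> w = u \<and> y \<cdot> w = v"
  unfolding is_product_def by blast

lemma product_eq:
  assumes prod: "is_product C P x X y Y" and "w1 \<in> Hom C T P" "w2 \<in> Hom C T P"
    and "x \<cdot> w1 = x \<cdot> w2" "y \<cdot> w1 = y \<cdot> w2"
  shows "w1 = w2"
proof -
  have "x \<in> Hom C P X" "y \<in> Hom C P Y" using prod unfolding is_product_def by blast+
  then have "\<exists>!w. w \<in> Hom C T P \<and> x \<cdot> w = x \<cdot> w1 \<and> y \<cdot> w = y \<cdot> w1"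
    using prod comp_hom assms(2) unfolding is_product_def by blast
  then show ?thesis by (rule ex1_unique) (use assms(2-5) in auto)
qed

lemma kernel_iso:
  assumes "is_kernel C K k A d B" "is_kernel C K' k' A d B"
  obtains v where "is_iso C K' K v" "k \<cdot> v = k'"
proof -
  have k: "k \<in> Hom C K A" "d \<cdot> k = zer C K B" and k': "k' \<in> Hom C K' A" "d \<cdot> k' = zer C K' B"
    using kernel_hom[OF assms(1)] kernel_hom[OF assms(2)] by auto
  obtain v where v: "v \<in> Hom C K' K" "k \<cdot> v = k'" using kernel_lift[OF assms(1) k'] by blast
  obtain u where u: "u \<in> Hom C K K'" "k' \<cdot> u = k" using kernel_lift[OF assms(2) k] by blast
  have "k \<cdot> (v \<cdot> u) = k \<cdot> idm C K"
    using comp_assoc[OF u(1) v(1) k(1)] u(2) v(2) comp_id_right[OF k(1)] by simp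
  then have vu: "v \<cdot> u = idm C K"
    using monicD[OF kernel_monic[OF assms(1)] comp_hom[OF u(1) v(1)] id_hom[OF hom_dom[OF k(1)]]] by blast
  have "k' \<cdot> (u \<cdot> v) = k' \<cdot> idm C K'"
    using comp_assoc[OF v(1) u(1) k'(1)] u(2) v(2) comp_id_right[OF k'(1)] by simp
  then have "u \<cdot> v = idm C K'"
    using monicD[OF kernel_monic[OF assms(2)] comp_hom[OF v(1) u(1)] id_hom[OF hom_dom[OF k'(1)]]] by blast
  with that is_isoI[OF v(1) u(1)] vu v(2) show ?thesis by blast
qed

lemma cokernel_iso:
  assumes "is_cokernel C A k B d Q" "is_cokernel C A k B d' Q'"
  obtains u where "is_iso C Q Q' u" "u \<cdot> d = d'"
proof -
  have d: "d \<in> Hom C B Q" "d \<cdot> k = zer C A Q" and d': "d' \<in> Hom C B Q'" "d' \<cdot> k = zer C A Q'"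
    using cokernel_hom[OF assms(1)] cokernel_hom[OF assms(2)] by auto
  obtain u where u: "u \<in> Hom C Q Q'" "u \<cdot> d = d'" using cokernel_desc[OF assms(1) d'] by blast
  obtain v where v: "v \<in> Hom C Q' Q" "v \<cdot> d' = d" using cokernel_desc[OF assms(2) d] by blast
  have "(v \<cdot> u) \<cdot> d = idm C Q \<cdot> d"
    using comp_assoc[OF d(1) u(1) v(1)] u(2) v(2) comp_id_left[OF d(1)] by simp
  then have vu: "v \<cdot> u = idm C Q"
    using epicD[OF cokernel_epic[OF assms(1)] comp_hom[OF u(1) v(1)] id_hom[OF hom_cod[OF d(1)]]] by blast
  have "(u \<cdot> v) \<cdot> d' = idm C Q' \<cdot> d'"
    using comp_assoc[OF d'(1) v(1) u(1)] u(2) v(2) comp_id_left[OF d'(1)] by simp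
  then have "u \<cdot> v = idm C Q'"
    using epicD[OF cokernel_epic[OF assms(2)] comp_hom[OF v(1) u(1)] id_hom[OF hom_cod[OF d'(1)]]] by blast
  with that is_isoI[OF u(1) v(1) vu] u(2) show ?thesis by blast
qed

lemma pullback_iso:
  assumes pb: "is_pullback C P t' p' B p E t D" and pb1: "is_pullback C P1 t1 p1 B p E t D"
  obtains \<psi> where "is_iso C P1 P \<psi>" "p' \<cdot> \<psi> = p1"
proof -
  have P: "P \<in> Ob C" "t' \<in> Hom C P B" "p' \<in> Hom C P E" "p \<cdot> t' = t \<cdot> p'"
    and P1: "P1 \<in> Ob C" "t1 \<in> Hom C P1 B" "p1 \<in> Hom C P1 E" "p \<cdot> t1 = t \<cdot> p1"
    using pullback_hom[OF pb] pullback_hom[OF pb1] by auto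
  obtain \<psi> where \<psi>: "\<psi> \<in> Hom C P1 P" "t' \<cdot> \<psi> = t1" "p' \<cdot> \<psi> = p1"
    using pullback_lift[OF pb P1(2-4)] by blast
  obtain \<phi> where \<phi>: "\<phi> \<in> Hom C P P1" "t1 \<cdot> \<phi> = t'" "p1 \<cdot> \<phi> = p'"
    using pullback_lift[OF pb1 P(2-4)] by blast
  have "\<phi> \<cdot> \<psi> = idm C P1"
    using pullback_eq[OF pb1 comp_hom[OF \<psi>(1) \<phi>(1)] id_hom[OF P1(1)]]
      comp_assoc[OF \<psi>(1) \<phi>(1) P1(2)] comp_assoc[OF \<psi>(1) \<phi>(1) P1(3)] \<phi> \<psi>
      comp_id_right[OF P1(2)] comp_id_right[OF P1(3)] by simp
  moreover have "\<psi> \<cdot> \<phi> = idm C P"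
    using pullback_eq[OF pb comp_hom[OF \<phi>(1) \<psi>(1)] id_hom[OF P(1)]]
      comp_assoc[OF \<phi>(1) \<psi>(1) P(2)] comp_assoc[OF \<phi>(1) \<psi>(1) P(3)] \<phi> \<psi>
      comp_id_right[OF P(2)] comp_id_right[OF P(3)] by simp
  ultimately show ?thesis using that is_isoI[OF \<psi>(1) \<phi>(1)] \<psi>(3) by blast
qed

lemma pullback_decomposition:
  assumes pb: "is_pullback C P \<pi>1 \<pi>2 Y p Y' p' Z"
    and ker: "is_kernel C X' i' Y' p' Z" and g: "g \<in> Hom C Y Y'" and tri: "p' \<cdot> g = p"
  obtains \<beta> where "\<beta> \<in> Hom C P X'" "\<And>T s. s \<in> Hom C T P \<Longrightarrow> \<pi>2 \<cdot> s = i' \<cdot> (\<beta> \<cdot> s) \<oplus> g \<cdot> (\<pi>1 \<cdot> s)"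
proof -
  have i': "i' \<in> Hom C X' Y'" and p': "p' \<in> Hom C Y' Z" using kernel_hom[OF ker] by auto
  have \<pi>1: "\<pi>1 \<in> Hom C P Y" and \<pi>2: "\<pi>2 \<in> Hom C P Y'" and sq: "p \<cdot> \<pi>1 = p' \<cdot> \<pi>2"
    using pullback_hom[OF pb] by auto
  have g\<pi>1: "g \<cdot> \<pi>1 \<in> Hom C P Y'" using comp_hom[OF \<pi>1 g] .
  have "p' \<cdot> (g \<cdot> \<pi>1) = p' \<cdot> \<pi>2" using comp_assoc[OF \<pi>1 g p'] tri sq by simp
  then have "p' \<cdot> (\<pi>2 \<ominus> g \<cdot> \<pi>1) = zer C P Z"
    using comp_minus[OF \<pi>2 g\<pi>1 p'] minus_self[OF comp_hom[OF \<pi>2 p']] by simp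
  then obtain \<beta> where \<beta>: "\<beta> \<in> Hom C P X'" and i'\<beta>: "i' \<cdot> \<beta> = \<pi>2 \<ominus> g \<cdot> \<pi>1"
    using kernel_lift[OF ker minus_hom[OF \<pi>2 g\<pi>1]] by blast
  have split: "\<pi>2 = i' \<cdot> \<beta> \<oplus> g \<cdot> \<pi>1"
    using minus_eq_iff_eq_plus[OF \<pi>2 g\<pi>1 comp_hom[OF \<beta> i']] i'\<beta> by simp
  have "\<pi>2 \<cdot> s = i' \<cdot> (\<beta> \<cdot> s) \<oplus> g \<cdot> (\<pi>1 \<cdot> s)" if s: "s \<in> Hom C T P" for s T
    using split plus_comp[OF s comp_hom[OF \<beta> i'] g\<pi>1] comp_assoc[OF s \<beta> i'] comp_assoc[OF s \<pi>1 g]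
    by simp
  with that \<beta> show ?thesis by blast
qed

lemma pullback_splits:
  assumes pb: "is_pullback C P \<pi>1 \<pi>2 Y p Y' p' Z"
    and ker: "is_kernel C X' i' Y' p' Z" and g: "g \<in> Hom C Y Y'" and tri: "p' \<cdot> g = p"
  obtains \<beta> w w' where "\<beta> \<in> Hom C P X'" "\<And>T s. s \<in> Hom C T P \<Longrightarrow> \<pi>2 \<cdot> s = i' \<cdot> (\<beta> \<cdot> s) \<oplus> g \<cdot> (\<pi>1 \<cdot> s)"
    and "w \<in> Hom C Y P" "\<pi>1 \<cdot> w = idm C Y" "\<pi>2 \<cdot> w = g" "\<beta> \<cdot> w = zer C Y X'"
    and "w' \<in> Hom C X' P" "\<pi>1 \<cdot> w' = zer C X' Y" "\<pi>2 \<cdot> w' = i'" "\<beta> \<cdot> w' = idm C X'"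
proof -
  obtain \<beta> where \<beta>: "\<beta> \<in> Hom C P X'"
    and split: "\<And>T s. s \<in> Hom C T P \<Longrightarrow> \<pi>2 \<cdot> s = i' \<cdot> (\<beta> \<cdot> s) \<oplus> g \<cdot> (\<pi>1 \<cdot> s)"
    using pullback_decomposition[OF pb ker g tri] by blast
  have i': "i' \<in> Hom C X' Y'" and p'i': "p' \<cdot> i' = zer C X' Z" using kernel_hom[OF ker] by auto
  have p: "p \<in> Hom C Y Z" using pullback_hom[OF pb] by blast
  have i'_monic: "monic C X' Y' i'" using kernel_monic[OF ker] .
  have "p \<cdot> idm C Y = p' \<cdot> g" using comp_id_right[OF p] tri by simp
  then obtain w where w: "w \<in> Hom C Y P" "\<pi>1 \<cdot> w = idm C Y" "\<pi>2 \<cdot> w = g"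
    using pullback_lift[OF pb id_hom[OF hom_dom[OF g]] g] by blast
  have "i' \<cdot> (\<beta> \<cdot> w) \<oplus> g = zer C Y Y' \<oplus> g"
    using split[OF w(1)] w comp_id_right[OF g] zero_plus[OF g] by simp
  then have "i' \<cdot> (\<beta> \<cdot> w) = i' \<cdot> zer C Y X'"
    using plus_right_cancel[OF comp_hom[OF comp_hom[OF w(1) \<beta>] i'] zero_hom[OF hom_dom[OF g] hom_cod[OF g]] g]
      comp_zero[OF i' hom_dom[OF g]] by simp
  then have \<beta>w: "\<beta> \<cdot> w = zer C Y X'"
    using monicD[OF i'_monic comp_hom[OF w(1) \<beta>] zero_hom[OF hom_dom[OF g] hom_dom[OF i']]] by blast
  have "p \<cdot> zer C X' Y = p' \<cdot> i'" using comp_zero[OF p hom_dom[OF i']] p'i' by simp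
  then obtain w' where w': "w' \<in> Hom C X' P" "\<pi>1 \<cdot> w' = zer C X' Y" "\<pi>2 \<cdot> w' = i'"
    using pullback_lift[OF pb zero_hom[OF hom_dom[OF i'] hom_dom[OF g]] i'] by blast
  have "i' \<cdot> (\<beta> \<cdot> w') = i' \<cdot> idm C X'"
    using split[OF w'(1)] w' comp_zero[OF g hom_dom[OF i']] plus_zero[OF comp_hom[OF comp_hom[OF w'(1) \<beta>] i']]
      comp_id_right[OF i'] by simp
  then have "\<beta> \<cdot> w' = idm C X'"
    using monicD[OF i'_monic comp_hom[OF w'(1) \<beta>] id_hom[OF hom_dom[OF i']]] by blast
  with that \<beta> split w \<beta>w w' show ?thesis by blast
qed

lemma cokernel_through_retraction:
  assumes cok: "is_cokernel C Cc a D h Y'"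
    and d: "d \<in> Hom C D Y" and s: "s \<in> Hom C Y D" and ds: "d \<cdot> s = idm C Y"
    and g: "g \<in> Hom C Y Y'" and gd: "g \<cdot> d = h"
    and j: "j \<in> Hom C K Y" and b: "epic C Cc K b" and da: "d \<cdot> a = j \<cdot> b"
  shows "is_cokernel C K j Y g Y'"
  unfolding is_cokernel_def
proof (intro conjI j g allI ballI impI)
  have a: "a \<in> Hom C Cc D" and h: "h \<in> Hom C D Y'" and ha: "h \<cdot> a = zer C Cc Y'"
    using cokernel_hom[OF cok] by auto
  have b_hom: "b \<in> Hom C Cc K" using b unfolding epic_def by blast
  have "(g \<cdot> j) \<cdot> b = zer C K Y' \<cdot> b"
    using comp_assoc[OF b_hom j g] comp_assoc[OF a d g] da gd ha zero_comp[OF b_hom hom_cod[OF g]] by simp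
  then show "g \<cdot> j = zer C K Y'"
    using epicD[OF b comp_hom[OF j g] zero_hom[OF hom_dom[OF j] hom_cod[OF g]]] by blast
  have g_epic: "epic C Y Y' g" using epic_if_comp_epic[OF _ d g] cokernel_epic[OF cok] gd by simp
  fix T t assume t: "t \<in> Hom C Y T" and tj: "t \<cdot> j = zer C K T"
  have "(t \<cdot> d) \<cdot> a = zer C Cc T"
    using comp_assoc[OF a d t] comp_assoc[OF b_hom j t] da tj zero_comp[OF b_hom hom_cod[OF t]] by simp
  then obtain u where u: "u \<in> Hom C Y' T" "u \<cdot> h = t \<cdot> d"
    using cokernel_desc[OF cok comp_hom[OF d t]] by blast
  have "u \<cdot> g = ((u \<cdot> g) \<cdot> d) \<cdot> s"
    using comp_assoc[OF s d comp_hom[OF g u(1)]] ds comp_id_right[OF comp_hom[OF g u(1)]] by simp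
  also have "(u \<cdot> g) \<cdot> d = t \<cdot> d" using comp_assoc[OF d g u(1)] gd u(2) by simp
  also have "(t \<cdot> d) \<cdot> s = t" using comp_assoc[OF s d t] ds comp_id_right[OF t] by simp
  finally show "\<exists>!u. u \<in> Hom C Y' T \<and> u \<cdot> g = t"
    using u(1) epicD[OF g_epic] by blast
qed

text \<open>The retraction \<open>d\<close> identifies the pushout of \<open>a\<close> along \<open>b\<close> with \<open>Y\<close>: the
  idempotent \<open>1 - s d\<close> on \<open>D\<close> is killed by \<open>h\<close>, hence factors through \<open>a\<close>, and thus dies in the pushout.\<close>
lemma pushout_iso_through_retraction:
  assumes po: "is_pushout C Cc a D b K b' a' Q" and ker: "is_kernel C Cc a D h Y'"
    and d: "d \<in> Hom C D Y" and s: "s \<in> Hom C Y D" and ds: "d \<cdot> s = idm C Y"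
    and g: "g \<in> Hom C Y Y'" and gd: "g \<cdot> d = h"
    and j: "monic C K Y j" and b: "epic C Cc K b" and da: "d \<cdot> a = j \<cdot> b"
  obtains \<phi> where "is_iso C Q Y \<phi>" "\<phi> \<cdot> a' = j"
proof -
  have Q: "Q \<in> Ob C" and a: "a \<in> Hom C Cc D" and b_hom: "b \<in> Hom C Cc K"
    and b': "b' \<in> Hom C D Q" and a': "a' \<in> Hom C K Q" and sq: "b' \<cdot> a = a' \<cdot> b"
    using pushout_hom[OF po] by auto
  have j_hom: "j \<in> Hom C K Y" using j unfolding monic_def by blast
  have h: "h \<in> Hom C D Y'" using kernel_hom[OF ker] by blast
  obtain \<phi> where \<phi>: "\<phi> \<in> Hom C Q Y" "\<phi> \<cdot> b' = d" "\<phi> \<cdot> a' = j"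
    using pushout_desc[OF po d j_hom da] by blast
  define \<psi> where "\<psi> = b' \<cdot> s"
  have \<psi>: "\<psi> \<in> Hom C Y Q" using comp_hom[OF s b'] unfolding \<psi>_def .
  have \<phi>\<psi>: "\<phi> \<cdot> \<psi> = idm C Y" using comp_assoc[OF s b' \<phi>(1)] \<phi>(2) ds unfolding \<psi>_def by simp
  have sd: "s \<cdot> d \<in> Hom C D D" and idD: "idm C D \<in> Hom C D D"
    using comp_hom[OF d s] id_hom[OF hom_dom[OF d]] by auto
  have dsd: "d \<cdot> (s \<cdot> d) = d" using comp_assoc[OF d s d] ds comp_id_left[OF d] by simp
  have "h \<cdot> (s \<cdot> d) = h" using comp_assoc[OF sd d g] gd dsd by simp
  then have "h \<cdot> (idm C D \<ominus> s \<cdot> d) = zer C D Y'"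
    using comp_minus[OF idD sd h] comp_id_right[OF h] minus_self[OF h] by simp
  then obtain t where t: "t \<in> Hom C D Cc" "a \<cdot> t = idm C D \<ominus> s \<cdot> d"
    using kernel_lift[OF ker minus_hom[OF idD sd]] by blast
  have "j \<cdot> (b \<cdot> t) = j \<cdot> zer C D K"
    using comp_assoc[OF t(1) b_hom j_hom] comp_assoc[OF t(1) a d] da t(2) comp_minus[OF idD sd d]
      comp_id_right[OF d] dsd minus_self[OF d] comp_zero[OF j_hom hom_dom[OF d]] by simp
  then have bt: "b \<cdot> t = zer C D K"
    using monicD[OF j comp_hom[OF t(1) b_hom] zero_hom[OF hom_dom[OF d] hom_dom[OF j_hom]]] by blast
  have "b' \<cdot> (idm C D \<ominus> s \<cdot> d) = zer C D Q"
    using t(2) comp_assoc[OF t(1) a b'] comp_assoc[OF t(1) b_hom a'] sq bt comp_zero[OF a' hom_dom[OF d]]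
    by simp
  then have "b' \<ominus> \<psi> \<cdot> d = zer C D Q"
    using comp_minus[OF idD sd b'] comp_id_right[OF b'] comp_assoc[OF d s b'] unfolding \<psi>_def by simp
  then have \<psi>d: "\<psi> \<cdot> d = b'" using eq_if_minus_eq_zero[OF b' comp_hom[OF d \<psi>]] by simp
  have "(\<psi> \<cdot> j) \<cdot> b = a' \<cdot> b"
    using comp_assoc[OF b_hom j_hom \<psi>] comp_assoc[OF a d \<psi>] da \<psi>d sq by simp
  then have \<psi>j: "\<psi> \<cdot> j = a'" using epicD[OF b comp_hom[OF j_hom \<psi>] a'] by blast
  have "\<psi> \<cdot> \<phi> = idm C Q"
    using pushout_eq[OF po comp_hom[OF \<phi>(1) \<psi>] id_hom[OF Q]] comp_assoc[OF b' \<phi>(1) \<psi>]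
      comp_assoc[OF a' \<phi>(1) \<psi>] \<phi> \<psi>d \<psi>j comp_id_left[OF b'] comp_id_left[OF a'] by simp
  with that is_isoI[OF \<phi>(1) \<psi>] \<phi>\<psi> \<phi>(3) show ?thesis by blast
qed

end

locale conflation_cat =
  fixes C :: "('o, 'm, 'e) addcat_scheme" and conf :: "('o, 'm) confl"
  assumes conflation_category: "conflation_category C conf"

sublocale conflation_cat \<subseteq> preadditive_category
  using conflation_category by unfold_locales (simp add: conflation_category_def is_additive_def)

context conflation_cat
begin

lemma conf_kernel: "conf A' i A p A'' \<Longrightarrow> is_kernel C A' i A p A''"
  and conf_cokernel: "conf A' i A p A'' \<Longrightarrow> is_cokernel C A' i A p A''"
  using conflation_category unfolding conflation_category_def by blast+

lemma conf_hom: "conf A' i A p A'' \<Longrightarrow> i \<in> Hom C A' A \<and> p \<in> Hom C A A'' \<and> p \<cdot> i = zer C A' A''"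
  using kernel_hom[OF conf_kernel] by blast

lemma conf_iso_closed:
  "conf A' i A p A'' \<Longrightarrow> j \<in> Hom C B' B \<Longrightarrow> q \<in> Hom C B B'' \<Longrightarrow>
   is_iso C A' B' a \<Longrightarrow> is_iso C A B b \<Longrightarrow> is_iso C A'' B'' c \<Longrightarrow>
   j \<cdot> a = b \<cdot> i \<Longrightarrow> q \<cdot> b = c \<cdot> p \<Longrightarrow> conf B' j B q B''"
  using conflation_category unfolding conflation_category_def by blast

lemma conf_replace_kernel:
  assumes cf: "conf A' i A p A''" and ker: "is_kernel C K k A p A''"
  shows "conf K k A p A''"
proof -
  have i: "i \<in> Hom C A' A" and p: "p \<in> Hom C A A''" using conf_hom[OF cf] by auto
  obtain v where v: "is_iso C A' K v" "k \<cdot> v = i" using kernel_iso[OF ker conf_kernel[OF cf]] .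
  show ?thesis
    using conf_iso_closed[OF cf kernel_hom[THEN conjunct1, OF ker] p v(1) id_is_iso id_is_iso]
      v(2) hom_cod[OF i] hom_cod[OF p] comp_id_left[OF i] comp_id_left[OF p] comp_id_right[OF p] by simp
qed

lemma conf_replace_cokernel:
  assumes cf: "conf A' i A p A''" and cok: "is_cokernel C A' i A q Q"
  shows "conf A' i A q Q"
proof -
  have i: "i \<in> Hom C A' A" and q: "q \<in> Hom C A Q" using conf_hom[OF cf] cokernel_hom[OF cok] by auto
  obtain u where u: "is_iso C A'' Q u" "u \<cdot> p = q" using cokernel_iso[OF conf_cokernel[OF cf] cok] .
  show ?thesis
    using conf_iso_closed[OF cf i q id_is_iso id_is_iso u(1)]
      u(2) hom_dom[OF i] hom_cod[OF i] comp_id_left[OF i] comp_id_right[OF i] comp_id_right[OF q] by simp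
qed

lemma conf_comp_iso:
  assumes cf: "conf K k A d B" and m: "is_iso C B B' m"
  shows "conf K k A (m \<cdot> d) B'"
proof -
  have k: "k \<in> Hom C K A" and d: "d \<in> Hom C A B" using conf_hom[OF cf] by auto
  have "m \<in> Hom C B B'" using m unfolding is_iso_def by blast
  then show ?thesis
    using conf_iso_closed[OF cf k comp_hom[OF d] id_is_iso id_is_iso m] hom_dom[OF k] hom_cod[OF k]
      comp_id_left[OF k] comp_id_right[OF k] comp_id_right[OF comp_hom[OF d]] by simp
qed

lemma inflation_epic_iso:
  assumes cf: "conf A m B r R" and epi: "epic C A B m"
  shows "is_iso C A B m"
proof -
  have m: "m \<in> Hom C A B" and r: "r \<in> Hom C B R" and rm: "r \<cdot> m = zer C A R"
    using conf_hom[OF cf] by auto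
  have "r \<cdot> m = zer C B R \<cdot> m" using rm zero_comp[OF m hom_cod[OF r]] by simp
  then have "r = zer C B R" using epicD[OF epi r zero_hom[OF hom_cod[OF m] hom_cod[OF r]]] by blast
  then have "r \<cdot> idm C B = zer C B R" using comp_id_right[OF r] by simp
  then obtain u where u: "u \<in> Hom C B A" "m \<cdot> u = idm C B"
    using kernel_lift[OF conf_kernel[OF cf] id_hom[OF hom_cod[OF m]]] by blast
  have "m \<cdot> (u \<cdot> m) = m \<cdot> idm C A"
    using comp_assoc[OF m u(1) m] u(2) comp_id_left[OF m] comp_id_right[OF m] by simp
  then have "u \<cdot> m = idm C A"
    using monicD[OF kernel_monic[OF conf_kernel[OF cf]] comp_hom[OF m u(1)] id_hom[OF hom_dom[OF m]]] by blast
  then show ?thesis using is_isoI[OF m u(1)] u(2) by blast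
qed

lemma kernel_if_factors_through_deflations:
  assumes g: "monic C Y Y' g" and q: "q \<in> Hom C Y' Q" and qg: "q \<cdot> g = zer C Y Q"
    and factor: "\<And>T t. t \<in> Hom C T Y' \<Longrightarrow> q \<cdot> t = zer C T Q \<Longrightarrow>
      \<exists>T' e z. deflation conf T' e T \<and> z \<in> Hom C T' Y \<and> t \<cdot> e = g \<cdot> z"
  shows "is_kernel C Y g Y' q Q"
  unfolding is_kernel_def
proof (intro conjI q qg allI ballI impI)
  show g_hom: "g \<in> Hom C Y Y'" using g unfolding monic_def by blast
  fix T t assume t: "t \<in> Hom C T Y'" and qt: "q \<cdot> t = zer C T Q"
  obtain T' e z where "deflation conf T' e T" and z: "z \<in> Hom C T' Y" and te: "t \<cdot> e = g \<cdot> z"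
    using factor[OF t qt] by blast
  then obtain E k where ce: "conf E k T' e T" unfolding deflation_def by blast
  have k: "k \<in> Hom C E T'" and e: "e \<in> Hom C T' T" and ek: "e \<cdot> k = zer C E T"
    using conf_hom[OF ce] by auto
  have "g \<cdot> (z \<cdot> k) = g \<cdot> zer C E Y"
    using comp_assoc[OF k z g_hom] comp_assoc[OF k e t] te ek comp_zero[OF t hom_dom[OF k]]
      comp_zero[OF g_hom hom_dom[OF k]] by simp
  then have "z \<cdot> k = zer C E Y"
    using monicD[OF g comp_hom[OF k z] zero_hom[OF hom_dom[OF k] hom_dom[OF g_hom]]] by blast
  then obtain u where u: "u \<in> Hom C T Y" "u \<cdot> e = z"
    using cokernel_desc[OF conf_cokernel[OF ce] z] by blast
  have "(g \<cdot> u) \<cdot> e = t \<cdot> e" using comp_assoc[OF e u(1) g_hom] u(2) te by simp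
  then have "g \<cdot> u = t"
    using epicD[OF cokernel_epic[OF conf_cokernel[OF ce]] comp_hom[OF u(1) g_hom] t] by blast
  then show "\<exists>!u. u \<in> Hom C T Y \<and> g \<cdot> u = t"
    using u(1) monicD[OF g] by blast
qed

end

locale deflation_exact_cat =
  fixes C :: "('o, 'm, 'e) addcat_scheme" and conf :: "('o, 'm) confl"
  assumes deflation_exact: "deflation_exact C conf"

sublocale deflation_exact_cat \<subseteq> conflation_cat
  using deflation_exact by unfold_locales (simp add: deflation_exact_def)

context deflation_exact_cat
begin

lemma deflation_comp: "deflation conf A p B \<Longrightarrow> deflation conf B q D \<Longrightarrow> deflation conf A (q \<cdot> p) D"
  using deflation_exact unfolding deflation_exact_def by blast

lemma deflation_pullback:
  assumes "deflation conf B p D" "t \<in> Hom C E D"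
  obtains P t' p' where "is_pullback C P t' p' B p E t D" "deflation conf P p' E"
  using assms deflation_exact unfolding deflation_exact_def by blast

lemma pullback_deflation:
  assumes pb: "is_pullback C P t' p' B p E t D" and p: "deflation conf B p D"
  shows "deflation conf P p' E"
proof -
  have t: "t \<in> Hom C E D" and p': "p' \<in> Hom C P E" using pullback_hom[OF pb] by auto
  obtain P1 t1 p1 where pb1: "is_pullback C P1 t1 p1 B p E t D" and "deflation conf P1 p1 E"
    using deflation_pullback[OF p t] .
  then obtain K k where cf: "conf K k P1 p1 E" unfolding deflation_def by blast
  have k: "k \<in> Hom C K P1" and p1: "p1 \<in> Hom C P1 E" using conf_hom[OF cf] by auto
  obtain \<psi> where \<psi>: "is_iso C P1 P \<psi>" "p' \<cdot> \<psi> = p1" using pullback_iso[OF pb pb1] .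
  have \<psi>_hom: "\<psi> \<in> Hom C P1 P" using \<psi>(1) unfolding is_iso_def by blast
  have "conf K (\<psi> \<cdot> k) P p' E"
    using conf_iso_closed[OF cf comp_hom[OF k \<psi>_hom] p' id_is_iso[OF hom_dom[OF k]] \<psi>(1) id_is_iso[OF hom_cod[OF p1]]]
      \<psi>(2) comp_id_right[OF comp_hom[OF k \<psi>_hom]] comp_id_left[OF p1] by simp
  then show ?thesis unfolding deflation_def by blast
qed

text \<open>The projection is the pullback of the deflation \<open>Y \<twoheadrightarrow> Z\<close> along the zero map \<open>K \<rightarrow> Z\<close>.\<close>
lemma product_projection_deflation:
  assumes "inflation conf X i Y" and prod: "is_product C P x X b K"
  shows "deflation conf P b K"
proof -
  obtain p Z where cf: "conf X i Y p Z" using assms(1) unfolding inflation_def by blast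
  have i: "i \<in> Hom C X Y" and p: "p \<in> Hom C Y Z" and pi: "p \<cdot> i = zer C X Z"
    using conf_hom[OF cf] by auto
  have x: "x \<in> Hom C P X" and b: "b \<in> Hom C P K" using prod unfolding is_product_def by blast+
  have z: "zer C K Z \<in> Hom C K Z" using zero_hom[OF hom_cod[OF b] hom_cod[OF p]] .
  have pb: "is_pullback C P (i \<cdot> x) b Y p K (zer C K Z) Z"
    unfolding is_pullback_def
  proof (intro conjI hom_dom[OF x] comp_hom[OF x i] b p z allI ballI impI)
    show "p \<cdot> (i \<cdot> x) = zer C K Z \<cdot> b"
      using comp_assoc[OF x i p] pi zero_comp[OF x hom_cod[OF p]] zero_comp[OF b hom_cod[OF p]] by simp
    fix T u v assume u: "u \<in> Hom C T Y" and v: "v \<in> Hom C T K" and puv: "p \<cdot> u = zer C K Z \<cdot> v"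
    then have "p \<cdot> u = zer C T Z" using zero_comp[OF v hom_cod[OF p]] by simp
    then obtain u' where u': "u' \<in> Hom C T X" "i \<cdot> u' = u"
      using kernel_lift[OF conf_kernel[OF cf] u] by blast
    obtain w where w: "w \<in> Hom C T P" "x \<cdot> w = u'" "b \<cdot> w = v" using product_lift[OF prod u'(1) v] by blast
    show "\<exists>!w. w \<in> Hom C T P \<and> (i \<cdot> x) \<cdot> w = u \<and> b \<cdot> w = v"
    proof (rule ex1I[of _ w])
      show "w \<in> Hom C T P \<and> (i \<cdot> x) \<cdot> w = u \<and> b \<cdot> w = v" using w u' comp_assoc[OF w(1) x i] by simp
      fix w' assume "w' \<in> Hom C T P \<and> (i \<cdot> x) \<cdot> w' = u \<and> b \<cdot> w' = v"
      then have w': "w' \<in> Hom C T P" "(i \<cdot> x) \<cdot> w' = u" "b \<cdot> w' = v" by auto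
      then have "i \<cdot> (x \<cdot> w') = i \<cdot> u'" using comp_assoc[OF w'(1) x i] u'(2) by simp
      then have "x \<cdot> w' = x \<cdot> w"
        using monicD[OF kernel_monic[OF conf_kernel[OF cf]] comp_hom[OF w'(1) x] u'(1)] w(2) by simp
      then show "w' = w" using product_eq[OF prod w'(1) w(1)] w'(3) w(3) by simp
    qed
  qed
  have "deflation conf Y p Z" using cf unfolding deflation_def by blast
  then show ?thesis by (rule pullback_deflation[OF pb])
qed

end

locale percolating_subcategory = deflation_exact_cat +
  fixes \<A>
  assumes percolating: "admissibly_deflation_percolating C conf \<A>"
begin

lemma factorisation_through_subcategory:
  assumes "A \<in> \<A>" "c \<in> Hom C X A"
  obtains A' d m where "A' \<in> \<A>" "deflation conf X d A'" "inflation conf A' m A" "c = m \<cdot> d"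
  using assms percolating unfolding admissibly_deflation_percolating_def by blast

lemma pushout_along_deflation:
  assumes "inflation conf X a D" "deflation conf X b A" "A \<in> \<A>"
  obtains P b' a' where "is_pushout C X a D b A b' a' P" "deflation conf D b' P" "inflation conf A a' P"
  using assms percolating unfolding admissibly_deflation_percolating_def by blast

lemma deflation_if_comp_epic:
  assumes q: "q \<in> Hom C Y A" and A: "A \<in> \<A>" and j: "j \<in> Hom C X Y" and epi: "epic C X A (q \<cdot> j)"
  shows "deflation conf Y q A"
proof -
  obtain A' d m where "deflation conf Y d A'" "inflation conf A' m A" and qmd: "q = m \<cdot> d"
    using factorisation_through_subcategory[OF A q] by blast
  then obtain K k r R where cd: "conf K k Y d A'" and cm: "conf A' m A r R"
    unfolding deflation_def inflation_def by blast
  have d: "d \<in> Hom C Y A'" and m: "m \<in> Hom C A' A" using conf_hom[OF cd] conf_hom[OF cm] by auto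
  have "epic C X A (m \<cdot> (d \<cdot> j))" using epi qmd comp_assoc[OF j d m] by simp
  then have "is_iso C A' A m" using inflation_epic_iso[OF cm] epic_if_comp_epic[OF _ comp_hom[OF j d] m] by blast
  then show ?thesis using conf_comp_iso[OF cd] qmd unfolding deflation_def by blast
qed

lemma conflation_through_retraction:
  assumes cf: "conf Cc a D h Y'" and b: "deflation conf Cc b K" and K: "K \<in> \<A>"
    and d: "d \<in> Hom C D Y" and s: "s \<in> Hom C Y D" and ds: "d \<cdot> s = idm C Y"
    and g: "g \<in> Hom C Y Y'" and gd: "g \<cdot> d = h"
    and j: "monic C K Y j" and da: "d \<cdot> a = j \<cdot> b"
  shows "conf K j Y g Y'"
proof -
  have j_hom: "j \<in> Hom C K Y" using j unfolding monic_def by blast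
  have "inflation conf Cc a D" using cf unfolding inflation_def by blast
  then obtain Q b' a' where po: "is_pushout C Cc a D b K b' a' Q" and "inflation conf K a' Q"
    using pushout_along_deflation[OF _ b K] by blast
  then obtain c W where ca: "conf K a' Q c W" unfolding inflation_def by blast
  have c: "c \<in> Hom C Q W" using conf_hom[OF ca] by blast
  obtain Kb kb where "conf Kb kb Cc b K" using b unfolding deflation_def by blast
  then have b_epic: "epic C Cc K b" using cokernel_epic[OF conf_cokernel] by blast
  obtain \<phi> where \<phi>: "is_iso C Q Y \<phi>" "\<phi> \<cdot> a' = j"
    using pushout_iso_through_retraction[OF po conf_kernel[OF cf] d s ds g gd j b_epic da] .
  then obtain \<psi> where \<phi>_hom: "\<phi> \<in> Hom C Q Y" and \<psi>: "\<psi> \<in> Hom C Y Q" "\<psi> \<cdot> \<phi> = idm C Q"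
    unfolding is_iso_def by blast
  have "conf K j Y (c \<cdot> \<psi>) W"
    using conf_iso_closed[OF ca j_hom comp_hom[OF \<psi>(1) c] id_is_iso[OF hom_dom[OF j_hom]] \<phi>(1)
        id_is_iso[OF hom_cod[OF c]]]
      \<phi>(2) comp_id_right[OF j_hom] comp_assoc[OF \<phi>_hom \<psi>(1) c] \<psi>(2) comp_id_right[OF c] comp_id_left[OF c]
    by simp
  moreover have "is_cokernel C K j Y g Y'"
    using cokernel_through_retraction[OF conf_cokernel[OF cf] d s ds g gd j_hom b_epic da] .
  ultimately show ?thesis using conf_replace_cokernel by blast
qed

end

locale morphism_of_conflations = deflation_exact_cat +
  fixes X i Y p Z X' i' Y' p' f g
  assumes row: "conf X i Y p Z" and row': "conf X' i' Y' p' Z"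
    and f: "f \<in> Hom C X X'" and g: "g \<in> Hom C Y Y'"
    and left_square: "g \<cdot> i = i' \<cdot> f" and right_triangle: "p' \<cdot> g = p"
begin

lemma i: "i \<in> Hom C X Y" and p: "p \<in> Hom C Y Z" and i': "i' \<in> Hom C X' Y'" and p': "p' \<in> Hom C Y' Z"
  using conf_hom[OF row] conf_hom[OF row'] by auto

lemma left_square_comp: "x \<in> Hom C T X \<Longrightarrow> g \<cdot> (i \<cdot> x) = i' \<cdot> (f \<cdot> x)"
  using comp_assoc[OF _ i g] comp_assoc[OF _ f i'] left_square by simp

lemma monic_if_monic:
  assumes f_monic: "monic C X X' f"
  shows "monic C Y Y' g"
proof (rule monicI[OF g])
  fix T u assume u: "u \<in> Hom C T Y" and gu: "g \<cdot> u = zer C T Y'"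
  have "p \<cdot> u = zer C T Z"
    using comp_assoc[OF u g p'] right_triangle gu comp_zero[OF p' hom_dom[OF u]] by simp
  then obtain x where x: "x \<in> Hom C T X" "i \<cdot> x = u" using kernel_lift[OF conf_kernel[OF row] u] by blast
  have "i' \<cdot> (f \<cdot> x) = i' \<cdot> zer C T X'"
    using left_square_comp[OF x(1)] x(2) gu comp_zero[OF i' hom_dom[OF u]] by simp
  then have "f \<cdot> x = f \<cdot> zer C T X"
    using monicD[OF kernel_monic[OF conf_kernel[OF row']] comp_hom[OF x(1) f]
        zero_hom[OF hom_dom[OF u] hom_cod[OF f]]] comp_zero[OF f hom_dom[OF u]] by simp
  then have "x = zer C T X" using monicD[OF f_monic x(1) zero_hom[OF hom_dom[OF u] hom_dom[OF f]]] by blast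
  then show "u = zer C T Y" using x(2) comp_zero[OF i hom_dom[OF u]] by simp
qed

end

text \<open>\<open>(\<pi>1, \<beta>)\<close> and \<open>(w, w')\<close> exhibit the pullback \<open>P\<close> as the biproduct \<open>Y \<oplus> X'\<close>.\<close>
locale split_pullback = morphism_of_conflations +
  fixes P \<pi>1 \<pi>2 \<beta> w w'
  assumes pullback: "is_pullback C P \<pi>1 \<pi>2 Y p Y' p' Z" and deflation_\<pi>2: "deflation conf P \<pi>2 Y'"
    and \<beta>: "\<beta> \<in> Hom C P X'" and split: "\<And>T s. s \<in> Hom C T P \<Longrightarrow> \<pi>2 \<cdot> s = i' \<cdot> (\<beta> \<cdot> s) \<oplus> g \<cdot> (\<pi>1 \<cdot> s)"
    and w: "w \<in> Hom C Y P" "\<pi>1 \<cdot> w = idm C Y" "\<pi>2 \<cdot> w = g" "\<beta> \<cdot> w = zer C Y X'"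
    and w': "w' \<in> Hom C X' P" "\<pi>1 \<cdot> w' = zer C X' Y" "\<pi>2 \<cdot> w' = i'" "\<beta> \<cdot> w' = idm C X'"
begin

lemma \<pi>1: "\<pi>1 \<in> Hom C P Y" and \<pi>2: "\<pi>2 \<in> Hom C P Y'" and pullback_square: "p \<cdot> \<pi>1 = p' \<cdot> \<pi>2"
  using pullback_hom[OF pullback] by auto

lemma kernel_of_\<pi>2:
  assumes s: "s \<in> Hom C T P" and \<pi>2s: "\<pi>2 \<cdot> s = zer C T Y'"
  obtains x where "x \<in> Hom C T X" "i \<cdot> x = \<pi>1 \<cdot> s" "\<beta> \<cdot> s \<oplus> f \<cdot> x = zer C T X'"
proof -
  have "p \<cdot> (\<pi>1 \<cdot> s) = zer C T Z"
    using comp_assoc[OF s \<pi>1 p] comp_assoc[OF s \<pi>2 p'] pullback_square \<pi>2s comp_zero[OF p' hom_dom[OF s]]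
    by simp
  then obtain x where x: "x \<in> Hom C T X" "i \<cdot> x = \<pi>1 \<cdot> s"
    using kernel_lift[OF conf_kernel[OF row] comp_hom[OF s \<pi>1]] by blast
  have "i' \<cdot> (\<beta> \<cdot> s \<oplus> f \<cdot> x) = i' \<cdot> zer C T X'"
    using comp_plus[OF comp_hom[OF s \<beta>] comp_hom[OF x(1) f] i'] left_square_comp[OF x(1)] x(2) split[OF s]
      \<pi>2s comp_zero[OF i' hom_dom[OF s]] by simp
  then have "\<beta> \<cdot> s \<oplus> f \<cdot> x = zer C T X'"
    using monicD[OF kernel_monic[OF conf_kernel[OF row']] plus_hom[OF comp_hom[OF s \<beta>] comp_hom[OF x(1) f]]
        zero_hom[OF hom_dom[OF s] hom_cod[OF f]]] by blast
  with that x show ?thesis by blast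
qed

lemma cokernel_descends:
  assumes cf: "conf X f X' c A"
  obtains q where "q \<in> Hom C Y' A" "q \<cdot> \<pi>2 = c \<cdot> \<beta>" "q \<cdot> g = zer C Y A" "q \<cdot> i' = c"
proof -
  have c: "c \<in> Hom C X' A" and cf0: "c \<cdot> f = zer C X A" using conf_hom[OF cf] by auto
  obtain K k where ck: "conf K k P \<pi>2 Y'" using deflation_\<pi>2 unfolding deflation_def by blast
  have k: "k \<in> Hom C K P" and \<pi>2k: "\<pi>2 \<cdot> k = zer C K Y'" using conf_hom[OF ck] by auto
  obtain x where x: "x \<in> Hom C K X" and \<beta>kfx: "\<beta> \<cdot> k \<oplus> f \<cdot> x = zer C K X'"
    using kernel_of_\<pi>2[OF k \<pi>2k] by blast
  have "c \<cdot> (f \<cdot> x) = zer C K A"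
    using comp_assoc[OF x f c] cf0 zero_comp[OF x hom_cod[OF c]] by simp
  then have "c \<cdot> (\<beta> \<cdot> k) = c \<cdot> (\<beta> \<cdot> k \<oplus> f \<cdot> x)"
    using comp_plus[OF comp_hom[OF k \<beta>] comp_hom[OF x f] c] plus_zero[OF comp_hom[OF comp_hom[OF k \<beta>] c]]
    by simp
  then have "(c \<cdot> \<beta>) \<cdot> k = zer C K A"
    using \<beta>kfx comp_zero[OF c hom_dom[OF k]] comp_assoc[OF k \<beta> c] by simp
  then obtain q where q: "q \<in> Hom C Y' A" "q \<cdot> \<pi>2 = c \<cdot> \<beta>"
    using cokernel_desc[OF conf_cokernel[OF ck] comp_hom[OF \<beta> c]] by blast
  have "q \<cdot> g = zer C Y A"
    using w comp_assoc[OF w(1) \<pi>2 q(1)] comp_assoc[OF w(1) \<beta> c] q(2) comp_zero[OF c hom_dom[OF w(1)]]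
    by simp
  moreover have "q \<cdot> i' = c"
    using w' comp_assoc[OF w'(1) \<pi>2 q(1)] comp_assoc[OF w'(1) \<beta> c] q(2) comp_id_right[OF c] by simp
  ultimately show ?thesis using that q by blast
qed

lemma factors_through_deflation_if_killed:
  assumes cf: "conf X f X' c A" and q: "q \<in> Hom C Y' A" "q \<cdot> \<pi>2 = c \<cdot> \<beta>"
    and t: "t \<in> Hom C T Y'" and qt: "q \<cdot> t = zer C T A"
  shows "\<exists>T' e z. deflation conf T' e T \<and> z \<in> Hom C T' Y \<and> t \<cdot> e = g \<cdot> z"
proof -
  obtain T' s e where pb: "is_pullback C T' s e P \<pi>2 T t Y'" and e: "deflation conf T' e T"
    using deflation_pullback[OF deflation_\<pi>2 t] .
  have s: "s \<in> Hom C T' P" and e_hom: "e \<in> Hom C T' T" and sq: "\<pi>2 \<cdot> s = t \<cdot> e"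
    using pullback_hom[OF pb] by auto
  have c: "c \<in> Hom C X' A" using conf_hom[OF cf] by blast
  have "c \<cdot> (\<beta> \<cdot> s) = zer C T' A"
    using comp_assoc[OF s \<beta> c] q(2) comp_assoc[OF s \<pi>2 q(1)] sq comp_assoc[OF e_hom t q(1)] qt
      zero_comp[OF e_hom hom_cod[OF q(1)]] by simp
  then obtain x where x: "x \<in> Hom C T' X" "f \<cdot> x = \<beta> \<cdot> s"
    using kernel_lift[OF conf_kernel[OF cf] comp_hom[OF s \<beta>]] by blast
  have "t \<cdot> e = g \<cdot> (i \<cdot> x \<oplus> \<pi>1 \<cdot> s)"
    using sq split[OF s] x(2) left_square_comp[OF x(1)] comp_plus[OF comp_hom[OF x(1) i] comp_hom[OF s \<pi>1] g]
    by simp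
  then show ?thesis using e plus_hom[OF comp_hom[OF x(1) i] comp_hom[OF s \<pi>1]] by blast
qed

text \<open>Via \<open>(\<pi>1 \<Phi>, \<delta>)\<close>, \<open>D\<close> is \<open>Y \<oplus> X\<close> and the kernel of \<open>\<pi>2 \<Phi> = (g, g i)\<close> consists of the
  pairs \<open>(i (k \<kappa> - x), x)\<close>; the maps \<open>\<delta> a\<close> and \<open>b\<close> read off \<open>x\<close> and \<open>\<kappa>\<close>.\<close>
context
  fixes K k D \<delta> \<Phi> Cc a x0 b
  assumes ck: "conf K k X f X'" and pbD: "is_pullback C D \<delta> \<Phi> X f P \<beta> X'"
    and ker: "is_kernel C Cc a D (\<pi>2 \<cdot> \<Phi>) Y'"
    and x0: "x0 \<in> Hom C Cc X" "i \<cdot> x0 = \<pi>1 \<cdot> (\<Phi> \<cdot> a)"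
    and b: "b \<in> Hom C Cc K" "k \<cdot> b = \<delta> \<cdot> a \<oplus> x0"
begin

lemma kernel_data_hom: "\<delta> \<in> Hom C D X" "\<Phi> \<in> Hom C D P" "a \<in> Hom C Cc D" "k \<in> Hom C K X"
  using pullback_hom[OF pbD] kernel_hom[OF ker] conf_hom[OF ck] by auto

lemma kernel_coordinates:
  assumes y: "y \<in> Hom C T Cc"
  shows "k \<cdot> (b \<cdot> y) = \<delta> \<cdot> (a \<cdot> y) \<oplus> x0 \<cdot> y"
    and "\<pi>1 \<cdot> (\<Phi> \<cdot> (a \<cdot> y)) = i \<cdot> (x0 \<cdot> y)"
    and "\<pi>2 \<cdot> (\<Phi> \<cdot> (a \<cdot> y)) = zer C T Y'"
proof -
  note \<delta> = kernel_data_hom(1) and \<Phi> = kernel_data_hom(2) and a = kernel_data_hom(3)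
    and k = kernel_data_hom(4)
  have \<Phi>a: "\<Phi> \<cdot> a \<in> Hom C Cc P" using comp_hom[OF a \<Phi>] .
  show "k \<cdot> (b \<cdot> y) = \<delta> \<cdot> (a \<cdot> y) \<oplus> x0 \<cdot> y"
    using comp_assoc[OF y b(1) k] b(2) plus_comp[OF y comp_hom[OF a \<delta>] x0(1)] comp_assoc[OF y a \<delta>] by simp
  show "\<pi>1 \<cdot> (\<Phi> \<cdot> (a \<cdot> y)) = i \<cdot> (x0 \<cdot> y)"
    using comp_assoc[OF y a \<Phi>] comp_assoc[OF y \<Phi>a \<pi>1] comp_assoc[OF y x0(1) i] x0(2) by simp
  show "\<pi>2 \<cdot> (\<Phi> \<cdot> (a \<cdot> y)) = zer C T Y'"
    using comp_assoc[OF y a \<Phi>] comp_assoc[OF y \<Phi>a \<pi>2] comp_assoc[OF a \<Phi> \<pi>2] kernel_hom[OF ker]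
      zero_comp[OF y hom_cod[OF \<pi>2]] by simp
qed

lemma kernel_product_lift:
  assumes u: "u \<in> Hom C T X" and v: "v \<in> Hom C T K"
  shows "\<exists>y \<in> Hom C T Cc. (\<delta> \<cdot> a) \<cdot> y = u \<and> b \<cdot> y = v"
proof -
  note \<delta> = kernel_data_hom(1) and a = kernel_data_hom(3) and k = kernel_data_hom(4)
  have i_monic: "monic C X Y i" using kernel_monic[OF conf_kernel[OF row]] .
  define xx where "xx = k \<cdot> v \<ominus> u"
  have xx: "xx \<in> Hom C T X" using minus_hom[OF comp_hom[OF v k] u] unfolding xx_def .
  have "p \<cdot> (i \<cdot> xx) = p' \<cdot> zer C T Y'"
    using comp_assoc[OF xx i p] conf_hom[OF row] zero_comp[OF xx hom_cod[OF p]]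
      comp_zero[OF p' hom_dom[OF u]] by simp
  then obtain e where e: "e \<in> Hom C T P" "\<pi>1 \<cdot> e = i \<cdot> xx" "\<pi>2 \<cdot> e = zer C T Y'"
    using pullback_lift[OF pullback comp_hom[OF xx i] zero_hom[OF hom_dom[OF u] hom_cod[OF \<pi>2]]] by blast
  obtain x where x: "x \<in> Hom C T X" "i \<cdot> x = \<pi>1 \<cdot> e" "\<beta> \<cdot> e \<oplus> f \<cdot> x = zer C T X'"
    using kernel_of_\<pi>2[OF e(1,3)] by blast
  have "x = xx" using monicD[OF i_monic x(1) xx] x(2) e(2) by simp
  moreover have "f \<cdot> xx = zer C T X' \<ominus> f \<cdot> u"
    using comp_minus[OF comp_hom[OF v k] u f] comp_assoc[OF v k f] conf_hom[OF ck]
      zero_comp[OF v hom_cod[OF f]] unfolding xx_def by simp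
  ultimately have "\<beta> \<cdot> e \<ominus> f \<cdot> u = zer C T X'"
    using x(3) zero_plus[OF neg_hom[OF comp_hom[OF u f]]] by simp
  then have "f \<cdot> u = \<beta> \<cdot> e" using eq_if_minus_eq_zero[OF comp_hom[OF e(1) \<beta>] comp_hom[OF u f]] by simp
  then obtain dd where dd: "dd \<in> Hom C T D" "\<delta> \<cdot> dd = u" "\<Phi> \<cdot> dd = e"
    using pullback_lift[OF pbD u e(1)] by blast
  have "(\<pi>2 \<cdot> \<Phi>) \<cdot> dd = zer C T Y'" using comp_assoc[OF dd(1) kernel_data_hom(2) \<pi>2] dd(3) e(3) by simp
  then obtain y where y: "y \<in> Hom C T Cc" "a \<cdot> y = dd"
    using kernel_lift[OF ker dd(1)] by blast
  have "x0 \<cdot> y = xx"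
    using monicD[OF i_monic comp_hom[OF y(1) x0(1)] xx] kernel_coordinates(2)[OF y(1)] y(2) dd(3) e(2)
    by simp
  then have "k \<cdot> (b \<cdot> y) = k \<cdot> v"
    using kernel_coordinates(1)[OF y(1)] y(2) dd(2) minus_eq_iff_eq_plus[OF comp_hom[OF v k] u xx] xx_def
      plus_comm[OF u xx] by simp
  then have "b \<cdot> y = v" by (rule monicD[OF kernel_monic[OF conf_kernel[OF ck]] comp_hom[OF y(1) b(1)] v])
  then show ?thesis using y comp_assoc[OF y(1) a \<delta>] dd(2) by auto
qed

lemma kernel_product_eq:
  assumes y1: "y1 \<in> Hom C T Cc" and y2: "y2 \<in> Hom C T Cc"
    and \<delta>a: "(\<delta> \<cdot> a) \<cdot> y1 = (\<delta> \<cdot> a) \<cdot> y2" and by12: "b \<cdot> y1 = b \<cdot> y2"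
  shows "y1 = y2"
proof -
  note \<delta> = kernel_data_hom(1) and \<Phi> = kernel_data_hom(2) and a = kernel_data_hom(3)
  have \<delta>a': "\<delta> \<cdot> (a \<cdot> y1) = \<delta> \<cdot> (a \<cdot> y2)" using \<delta>a comp_assoc[OF y1 a \<delta>] comp_assoc[OF y2 a \<delta>] by simp
  then have "x0 \<cdot> y1 = x0 \<cdot> y2"
    using plus_left_cancel[OF comp_hom[OF y1 x0(1)] comp_hom[OF y2 x0(1)] comp_hom[OF comp_hom[OF y1 a] \<delta>]]
      kernel_coordinates(1)[OF y1] kernel_coordinates(1)[OF y2] by12 by simp
  then have "\<Phi> \<cdot> (a \<cdot> y1) = \<Phi> \<cdot> (a \<cdot> y2)"
    using pullback_eq[OF pullback comp_hom[OF comp_hom[OF y1 a] \<Phi>] comp_hom[OF comp_hom[OF y2 a] \<Phi>]]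
      kernel_coordinates(2,3)[OF y1] kernel_coordinates(2,3)[OF y2] by simp
  then have "a \<cdot> y1 = a \<cdot> y2"
    using pullback_eq[OF pbD comp_hom[OF y1 a] comp_hom[OF y2 a] \<delta>a'] by blast
  then show "y1 = y2" by (rule monicD[OF kernel_monic[OF ker] y1 y2])
qed

lemma kernel_is_product: "is_product C Cc (\<delta> \<cdot> a) X b K"
  using is_productI[OF comp_hom[OF kernel_data_hom(3,1)] b(1)] kernel_product_lift kernel_product_eq by blast

end

lemma retraction_from_pullback:
  assumes pbD: "is_pullback C D \<delta> \<Phi> X f P \<beta> X'"
  obtains \<sigma> where "\<sigma> \<in> Hom C Y D" "(i \<cdot> \<delta> \<oplus> \<pi>1 \<cdot> \<Phi>) \<cdot> \<sigma> = idm C Y"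
    and "g \<cdot> (i \<cdot> \<delta> \<oplus> \<pi>1 \<cdot> \<Phi>) = \<pi>2 \<cdot> \<Phi>"
proof -
  have \<delta>: "\<delta> \<in> Hom C D X" and \<Phi>: "\<Phi> \<in> Hom C D P" and sqD: "f \<cdot> \<delta> = \<beta> \<cdot> \<Phi>"
    using pullback_hom[OF pbD] by auto
  have "f \<cdot> zer C Y X = \<beta> \<cdot> w" using comp_zero[OF f hom_dom[OF w(1)]] w(4) by simp
  then obtain \<sigma> where \<sigma>: "\<sigma> \<in> Hom C Y D" "\<delta> \<cdot> \<sigma> = zer C Y X" "\<Phi> \<cdot> \<sigma> = w"
    using pullback_lift[OF pbD zero_hom[OF hom_dom[OF w(1)] hom_dom[OF f]] w(1)] by blast
  have "(i \<cdot> \<delta> \<oplus> \<pi>1 \<cdot> \<Phi>) \<cdot> \<sigma> = idm C Y"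
    using plus_comp[OF \<sigma>(1) comp_hom[OF \<delta> i] comp_hom[OF \<Phi> \<pi>1]] comp_assoc[OF \<sigma>(1) \<delta> i]
      comp_assoc[OF \<sigma>(1) \<Phi> \<pi>1] \<sigma>(2,3) w(2) comp_zero[OF i hom_dom[OF w(1)]] zero_plus[OF id_hom[OF hom_cod[OF i]]]
    by simp
  moreover have "g \<cdot> (i \<cdot> \<delta> \<oplus> \<pi>1 \<cdot> \<Phi>) = \<pi>2 \<cdot> \<Phi>"
    using comp_plus[OF comp_hom[OF \<delta> i] comp_hom[OF \<Phi> \<pi>1] g] left_square_comp[OF \<delta>] sqD split[OF \<Phi>] by simp
  ultimately show ?thesis using that \<sigma>(1) by blast
qed

lemma kernel_decomposition:
  assumes ck: "conf K k X f X'" and pbD: "is_pullback C D \<delta> \<Phi> X f P \<beta> X'"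
    and ker: "is_kernel C Cc a D (\<pi>2 \<cdot> \<Phi>) Y'"
  obtains b where "is_product C Cc (\<delta> \<cdot> a) X b K" "(i \<cdot> \<delta> \<oplus> \<pi>1 \<cdot> \<Phi>) \<cdot> a = (i \<cdot> k) \<cdot> b"
proof -
  have \<delta>: "\<delta> \<in> Hom C D X" and \<Phi>: "\<Phi> \<in> Hom C D P" and sqD: "f \<cdot> \<delta> = \<beta> \<cdot> \<Phi>"
    using pullback_hom[OF pbD] by auto
  have a: "a \<in> Hom C Cc D" and ha: "(\<pi>2 \<cdot> \<Phi>) \<cdot> a = zer C Cc Y'" using kernel_hom[OF ker] by auto
  have k: "k \<in> Hom C K X" using conf_hom[OF ck] by blast
  have \<delta>a: "\<delta> \<cdot> a \<in> Hom C Cc X" using comp_hom[OF a \<delta>] .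
  have "\<pi>2 \<cdot> (\<Phi> \<cdot> a) = zer C Cc Y'" using comp_assoc[OF a \<Phi> \<pi>2] ha by simp
  then obtain x0 where x0: "x0 \<in> Hom C Cc X" "i \<cdot> x0 = \<pi>1 \<cdot> (\<Phi> \<cdot> a)" "\<beta> \<cdot> (\<Phi> \<cdot> a) \<oplus> f \<cdot> x0 = zer C Cc X'"
    using kernel_of_\<pi>2[OF comp_hom[OF a \<Phi>]] by blast
  have "f \<cdot> (\<delta> \<cdot> a \<oplus> x0) = zer C Cc X'"
    using comp_plus[OF \<delta>a x0(1) f] comp_assoc[OF a \<delta> f] comp_assoc[OF a \<Phi> \<beta>] sqD x0(3) by simp
  then obtain b where b: "b \<in> Hom C Cc K" "k \<cdot> b = \<delta> \<cdot> a \<oplus> x0"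
    using kernel_lift[OF conf_kernel[OF ck] plus_hom[OF \<delta>a x0(1)]] by blast
  have "(i \<cdot> \<delta> \<oplus> \<pi>1 \<cdot> \<Phi>) \<cdot> a = i \<cdot> (\<delta> \<cdot> a \<oplus> x0)"
    using plus_comp[OF a comp_hom[OF \<delta> i] comp_hom[OF \<Phi> \<pi>1]] comp_assoc[OF a \<delta> i] comp_assoc[OF a \<Phi> \<pi>1]
      x0(2) comp_plus[OF \<delta>a x0(1) i] by simp
  also have "\<dots> = (i \<cdot> k) \<cdot> b" using b comp_assoc[OF b(1) k i] by simp
  finally show ?thesis using that kernel_is_product[OF ck pbD ker x0(1,2) b] by blast
qed

end

lemma (in morphism_of_conflations) split_pullback_exists:
  obtains P \<pi>1 \<pi>2 \<beta> w w' where "split_pullback C conf X i Y p Z X' i' Y' p' f g P \<pi>1 \<pi>2 \<beta> w w'"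
proof -
  have "deflation conf Y p Z" using row unfolding deflation_def by blast
  then obtain P \<pi>1 \<pi>2 where pb: "is_pullback C P \<pi>1 \<pi>2 Y p Y' p' Z" and d: "deflation conf P \<pi>2 Y'"
    using deflation_pullback[OF _ p'] by blast
  show ?thesis
    by (rule pullback_splits[OF pb conf_kernel[OF row'] g right_triangle], rule that,
        rule split_pullback.intro[OF morphism_of_conflations_axioms split_pullback_axioms.intro[OF pb d]])
      assumption+
qed

locale percolating_split_pullback = split_pullback + percolating_subcategory
begin

lemma conflation_if_cokernel_in_subcategory:
  assumes cf: "conf X f X' c A" and A: "A \<in> \<A>"
  obtains q where "conf Y g Y' q A"
proof -
  obtain q where q: "q \<in> Hom C Y' A" "q \<cdot> \<pi>2 = c \<cdot> \<beta>" "q \<cdot> g = zer C Y A" "q \<cdot> i' = c"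
    using cokernel_descends[OF cf] .
  have "deflation conf Y' q A"
    using deflation_if_comp_epic[OF q(1) A i'] q(4) cokernel_epic[OF conf_cokernel[OF cf]] by simp
  then obtain Kq kq where cq: "conf Kq kq Y' q A" unfolding deflation_def by blast
  have "is_kernel C Y g Y' q A"
    by (rule kernel_if_factors_through_deflations[OF monic_if_monic[OF kernel_monic[OF conf_kernel[OF cf]]]
          q(1,3)])
      (rule factors_through_deflation_if_killed[OF cf q(1,2)])
  then show ?thesis using that conf_replace_kernel[OF cq] by blast
qed

lemma conflation_if_kernel_in_subcategory:
  assumes ck: "conf K k X f X'" and K: "K \<in> \<A>"
  shows "conf K (i \<cdot> k) Y g Y'"
proof -
  have "deflation conf X f X'" using ck unfolding deflation_def by blast
  then obtain D \<delta> \<Phi> where pbD: "is_pullback C D \<delta> \<Phi> X f P \<beta> X'" and "deflation conf D \<Phi> P"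
    using deflation_pullback[OF _ \<beta>] by blast
  then have "deflation conf D (\<pi>2 \<cdot> \<Phi>) Y'" using deflation_comp deflation_\<pi>2 by blast
  then obtain Cc a where ca: "conf Cc a D (\<pi>2 \<cdot> \<Phi>) Y'" unfolding deflation_def by blast
  obtain \<sigma> where \<sigma>: "\<sigma> \<in> Hom C Y D" "(i \<cdot> \<delta> \<oplus> \<pi>1 \<cdot> \<Phi>) \<cdot> \<sigma> = idm C Y"
    and gd: "g \<cdot> (i \<cdot> \<delta> \<oplus> \<pi>1 \<cdot> \<Phi>) = \<pi>2 \<cdot> \<Phi>"
    using retraction_from_pullback[OF pbD] .
  obtain b where prod: "is_product C Cc (\<delta> \<cdot> a) X b K" and da: "(i \<cdot> \<delta> \<oplus> \<pi>1 \<cdot> \<Phi>) \<cdot> a = (i \<cdot> k) \<cdot> b"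
    using kernel_decomposition[OF ck pbD conf_kernel[OF ca]] .
  have "deflation conf Cc b K"
    using product_projection_deflation[OF _ prod] row unfolding inflation_def by blast
  moreover have "monic C K Y (i \<cdot> k)"
    using monic_comp[OF kernel_monic[OF conf_kernel[OF ck]] kernel_monic[OF conf_kernel[OF row]]] .
  moreover have "i \<cdot> \<delta> \<oplus> \<pi>1 \<cdot> \<Phi> \<in> Hom C D Y"
    using pullback_hom[OF pbD] plus_hom[OF comp_hom[OF _ i] comp_hom[OF _ \<pi>1]] by blast
  ultimately show ?thesis using conflation_through_retraction[OF ca _ K _ \<sigma> g gd _ da] by blast
qed

end

theorem mainTheorem11:
  fixes C :: "('o, 'm, 'e) addcat_scheme" and conf :: "('o, 'm) confl" and \<A> :: "'o set"
  assumes "deflation_exact C conf"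
    and "admissibly_deflation_percolating C conf \<A>"
    and "conf X i Y p Z" and "conf X' i' Y' p' Z"
    and "f \<in> Hom C X X'" and "g \<in> Hom C Y Y'"
    and "cmp C g i = cmp C i' f" and "cmp C p' g = cmp C (idm C Z) p"
  shows "(A_inflation conf \<A> X f X' \<longrightarrow> A_inflation conf \<A> Y g Y') \<and>
         (A_deflation conf \<A> X f X' \<longrightarrow> A_deflation conf \<A> Y g Y')"
proof -
  interpret deflation_exact_cat C conf by unfold_locales (rule assms(1))
  have "cmp C p' g = p" using assms(8) comp_id_left conf_hom[OF assms(3)] by auto
  then interpret morphism_of_conflations C conf X i Y p Z X' i' Y' p' f g
    using assms(3-7) by unfold_locales
  obtain P \<pi>1 \<pi>2 \<beta> w w' where "split_pullback C conf X i Y p Z X' i' Y' p' f g P \<pi>1 \<pi>2 \<beta> w w'"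
    by (rule split_pullback_exists)
  then interpret percolating_split_pullback C conf X i Y p Z X' i' Y' p' f g P \<pi>1 \<pi>2 \<beta> w w' \<A>
    by (intro percolating_split_pullback.intro percolating_subcategory.intro deflation_exact_cat_axioms
        percolating_subcategory_axioms.intro assms(2))
  show ?thesis
    unfolding A_inflation_def A_deflation_def
    using conflation_if_cokernel_in_subcategory conflation_if_kernel_in_subcategory by metis
qed

end
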